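(* Let $L/F$ be a degree-2 datum (with $\theta$, $u$ as below). Let $Q$ be the quiver with vertices $1,2,3$ and arrows $\alpha:2\to1$, $\beta_0,\beta_1:3\to2$, $\gamma:1\to3$, with fields $F_1=F$, $F_2=F_3=L$ and bimodules $A_\alpha=F\otimes_FL$, $A_{\beta_0}=L\otimes_LL$, $A_{\beta_1}=L^{\theta}\otimes_LL$, $A_\gamma=L\otimes_FF$. Let $$\Lambda'=T_R(A)\big/\big\langle(\beta_0+\beta_1)\gamma,\ \tfrac12(\gamma\alpha+u^{-1}\gamma\alpha u),\ \tfrac12(\gamma\alpha-u^{-1}\gamma\alpha u),\ \alpha(\beta_0+\beta_1)\big\rangle$$ (with $u$ on the right of $\gamma\alpha$ meaning $ue_2$, and $u^{-1}$ on the left meaning $u^{-1}e_3$). Let $\widehat Q$ be the quiver with vertices $1,2,3$, arrows $\alpha:2\to1$, $\beta:3\to2$, $\gamma:1\to3$ and loops $s_2$ at $2$, $s_3$ at $3$, and let $\Lambda=F\widehat Q/\langle\alpha\beta,\beta\gamma,\gamma\alpha,\ s_2^2-u^2e_2,\ s_3^2-u^2e_3\rangle$ (ordinary path algebra over $F$, noting $u^2\in F$). Then $\Lambda'\cong\Lambda$ as $F$-algebras.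
   Context: Degree-2 datum: a degree-2 field extension $L/F$ with $\operatorname{char}F\neq2$; $\theta$ is the nontrivial element of $\operatorname{Gal}(L/F)$ and $u\in L\setminus\{0\}$ satisfies $\theta(u)=-u$, so $u^2\in F$. Twisted bimodules: for fields $K'''\subseteq K',K''$ and an automorphism $g$ of $K'''$, $K'^{g}\otimes_{K'''}K''$ is the $K'$-$K''$-bimodule where $K'^g$ is $K'$ with left multiplication and right action $m\star z=m\,g(z)$; when $g$ is the identity the superscript is omitted. Tensor ring of a species: for a quiver $Q$ with fields $F_i$ at vertices and bimodules $A_a$ for arrows $a:t(a)\to h(a)$ of the form above, $R=\prod_iF_i$ (idempotents $e_i$), $A=\bigoplus_aA_a$, $T_R(A)=\bigoplus_{n\ge0}A^{\otimes_Rn}$; $a$ denotes $1\otimes1\in A_a$; products right-to-left ($ab$ = $b$ then $a$); $az=g_a(z)a$ for $z$ in the intersection field; field elements adjacent to arrows lie in $R$ at the corresponding vertex. $\langle X\rangle$ is the two-sided ideal generated by $X$. *)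

theory Defs
  imports "HOL-Algebra.QuotRing"
begin

text \<open>L is the ambient type 'a (a field); F is a subfield of L given as a set.\<close>

definition is_subfield :: "'a::field set \<Rightarrow> bool" where
  "is_subfield F \<longleftrightarrow> 0 \<in> F \<and> 1 \<in> F \<and>
     (\<forall>x\<in>F. \<forall>y\<in>F. x + y \<in> F \<and> x * y \<in> F) \<and>
     (\<forall>x\<in>F. - x \<in> F \<and> inverse x \<in> F)"

definition degree_two :: "'a::field set \<Rightarrow> bool" where
  "degree_two F \<longleftrightarrow> (\<exists>b1 b2. \<forall>x::'a. \<exists>!cd. cd \<in> F \<times> F \<and> x = fst cd * b1 + snd cd * b2)"

definition galois_elt :: "'a::field set \<Rightarrow> ('a \<Rightarrow> 'a) \<Rightarrow> bool" where
  "galois_elt F \<theta> \<longleftrightarrow> bij \<theta> \<and> (\<forall>x y. \<theta> (x + y) = \<theta> x + \<theta> y) \<and>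
     (\<forall>x y. \<theta> (x * y) = \<theta> x * \<theta> y) \<and> (\<forall>c\<in>F. \<theta> c = c)"

definition deg2_datum :: "'a::field set \<Rightarrow> ('a \<Rightarrow> 'a) \<Rightarrow> 'a \<Rightarrow> bool" where
  "deg2_datum F \<theta> u \<longleftrightarrow> is_subfield F \<and> degree_two F \<and> (2::'a) \<noteq> 0 \<and>
     galois_elt F \<theta> \<and> \<theta> \<noteq> id \<and> u \<noteq> 0 \<and> \<theta> u = - u"

text \<open>Elements: finitely supported F-valued functions on words; the word [x1,...,xn]
  stands for the monomial x1 * ... * xn.\<close>

definition falg_carrier :: "'a::field set \<Rightarrow> ('g list \<Rightarrow> 'a) set" where
  "falg_carrier F = {p. finite {w. p w \<noteq> 0} \<and> (\<forall>w. p w \<in> F)}"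

definition fmul :: "('g list \<Rightarrow> 'a::field) \<Rightarrow> ('g list \<Rightarrow> 'a) \<Rightarrow> 'g list \<Rightarrow> 'a"
    (infixl \<open>[*]\<close> 70) where
  "p [*] q = (\<lambda>w. \<Sum>i\<le>length w. p (take i w) * q (drop i w))"

definition fadd :: "('g list \<Rightarrow> 'a::field) \<Rightarrow> ('g list \<Rightarrow> 'a) \<Rightarrow> 'g list \<Rightarrow> 'a"
    (infixl \<open>[+]\<close> 65) where
  "p [+] q = (\<lambda>w. p w + q w)"

definition fsub :: "('g list \<Rightarrow> 'a::field) \<Rightarrow> ('g list \<Rightarrow> 'a) \<Rightarrow> 'g list \<Rightarrow> 'a"
    (infixl \<open>[-]\<close> 65) where
  "p [-] q = (\<lambda>w. p w - q w)"

definition fsmul :: "'a::field \<Rightarrow> ('g list \<Rightarrow> 'a) \<Rightarrow> 'g list \<Rightarrow> 'a" where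
  "fsmul c p = (\<lambda>w. c * p w)"

definition fscal :: "'a::field \<Rightarrow> 'g list \<Rightarrow> 'a" where
  "fscal c = (\<lambda>w. if w = [] then c else 0)"

definition fgen :: "'g \<Rightarrow> 'g list \<Rightarrow> 'a::field" where
  "fgen x = (\<lambda>w. if w = [x] then 1 else 0)"

definition free_alg :: "'a::field set \<Rightarrow> ('g list \<Rightarrow> 'a) ring" where
  "free_alg F = \<lparr>carrier = falg_carrier F, mult = fmul, one = fscal 1,
                 zero = (\<lambda>w. 0), add = fadd\<rparr>"

definition presented :: "'a::field set \<Rightarrow> ('g list \<Rightarrow> 'a) set \<Rightarrow> ('g list \<Rightarrow> 'a) set ring" where
  "presented F S = free_alg F Quot genideal (free_alg F) S"

definition pclass :: "'a::field set \<Rightarrow> ('g list \<Rightarrow> 'a) set \<Rightarrow> ('g list \<Rightarrow> 'a) \<Rightarrow> ('g list \<Rightarrow> 'a) set" where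
  "pclass F S p = genideal (free_alg F) S +>\<^bsub>free_alg F\<^esub> p"

text \<open>Isomorphism of F-algebras: a ring isomorphism which is the identity on scalars
  (hence F-linear).\<close>
definition F_alg_iso :: "'a::field set \<Rightarrow> ('g list \<Rightarrow> 'a) set \<Rightarrow> ('h list \<Rightarrow> 'a) set \<Rightarrow> bool" where
  "F_alg_iso F S T \<longleftrightarrow> (\<exists>h \<in> ring_iso (presented F S) (presented F T).
       \<forall>c\<in>F. h (pclass F S (fscal c)) = pclass F T (fscal c))"

text \<open>Generators: E1 = e_1 (F at vertex 1); L2 z = z e_2 and L3 z = z e_3 for z in L
  (so e_2 = L2 1, e_3 = L3 1); the arrows alpha, beta_0, beta_1, gamma.\<close>
datatype 'a sgen = E1 | L2 'a | L3 'a | SAlpha | SBeta0 | SBeta1 | SGamma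

text \<open>Relations presenting T_R(A) as an F-algebra: R = F x L x L, and for each arrow
  a = e_h a e_t together with a z = g_a(z) a for z in the intersection field
  (trivial when the intersection field is F, since F is central).\<close>
definition TR_rels :: "'a::field set \<Rightarrow> ('a \<Rightarrow> 'a) \<Rightarrow> ('a sgen list \<Rightarrow> 'a) set" where
  "TR_rels F \<theta> =
     {fgen E1 [*] fgen E1 [-] fgen E1}
   \<union> {fgen (L2 z) [*] fgen (L2 w) [-] fgen (L2 (z * w)) | z w. True}
   \<union> {fgen (L3 z) [*] fgen (L3 w) [-] fgen (L3 (z * w)) | z w. True}
   \<union> {fgen (L2 z) [+] fgen (L2 w) [-] fgen (L2 (z + w)) | z w. True}
   \<union> {fgen (L3 z) [+] fgen (L3 w) [-] fgen (L3 (z + w)) | z w. True}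
   \<union> {fscal c [*] fgen (L2 1) [-] fgen (L2 c) | c. c \<in> F}
   \<union> {fscal c [*] fgen (L3 1) [-] fgen (L3 c) | c. c \<in> F}
   \<union> {fgen E1 [+] fgen (L2 1) [+] fgen (L3 1) [-] fscal 1}
   \<union> {fgen E1 [*] fgen (L2 z) | z. True} \<union> {fgen (L2 z) [*] fgen E1 | z. True}
   \<union> {fgen E1 [*] fgen (L3 z) | z. True} \<union> {fgen (L3 z) [*] fgen E1 | z. True}
   \<union> {fgen (L2 z) [*] fgen (L3 w) | z w. True} \<union> {fgen (L3 w) [*] fgen (L2 z) | z w. True}
   \<union> {fgen SAlpha [-] fgen E1 [*] fgen SAlpha [*] fgen (L2 1),
      fgen SBeta0 [-] fgen (L2 1) [*] fgen SBeta0 [*] fgen (L3 1),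
      fgen SBeta1 [-] fgen (L2 1) [*] fgen SBeta1 [*] fgen (L3 1),
      fgen SGamma [-] fgen (L3 1) [*] fgen SGamma [*] fgen E1}
   \<union> {fgen SBeta0 [*] fgen (L3 z) [-] fgen (L2 z) [*] fgen SBeta0 | z. True}
   \<union> {fgen SBeta1 [*] fgen (L3 z) [-] fgen (L2 (\<theta> z)) [*] fgen SBeta1 | z. True}"

definition Lambda'_rels :: "'a::field set \<Rightarrow> ('a \<Rightarrow> 'a) \<Rightarrow> 'a \<Rightarrow> ('a sgen list \<Rightarrow> 'a) set" where
  "Lambda'_rels F \<theta> u = TR_rels F \<theta> \<union>
     {(fgen SBeta0 [+] fgen SBeta1) [*] fgen SGamma,
      fsmul (1/2) (fgen SGamma [*] fgen SAlpha
          [+] fgen (L3 (inverse u)) [*] fgen SGamma [*] fgen SAlpha [*] fgen (L2 u)),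
      fsmul (1/2) (fgen SGamma [*] fgen SAlpha
          [-] fgen (L3 (inverse u)) [*] fgen SGamma [*] fgen SAlpha [*] fgen (L2 u)),
      fgen SAlpha [*] (fgen SBeta0 [+] fgen SBeta1)}"

datatype qgen = V1 | V2 | V3 | QAlpha | QBeta | QGamma | QS2 | QS3

fun qvert :: "nat \<Rightarrow> qgen" where
  "qvert (Suc 0) = V1" | "qvert (Suc (Suc 0)) = V2" | "qvert _ = V3"

definition pathalg_rels :: "(qgen list \<Rightarrow> 'a::field) set" where
  "pathalg_rels =
     {fgen (qvert i) [*] fgen (qvert j) [-] (if i = j then fgen (qvert i) else (\<lambda>w. 0))
        | i j. i \<in> {1,2,3} \<and> j \<in> {1,2,3}}
   \<union> {fgen V1 [+] fgen V2 [+] fgen V3 [-] fscal 1,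
      fgen QAlpha [-] fgen V1 [*] fgen QAlpha [*] fgen V2,
      fgen QBeta [-] fgen V2 [*] fgen QBeta [*] fgen V3,
      fgen QGamma [-] fgen V3 [*] fgen QGamma [*] fgen V1,
      fgen QS2 [-] fgen V2 [*] fgen QS2 [*] fgen V2,
      fgen QS3 [-] fgen V3 [*] fgen QS3 [*] fgen V3}"

definition Lambda_rels :: "'a::field \<Rightarrow> (qgen list \<Rightarrow> 'a) set" where
  "Lambda_rels u = pathalg_rels \<union>
     {fgen QAlpha [*] fgen QBeta, fgen QBeta [*] fgen QGamma, fgen QGamma [*] fgen QAlpha,
      fgen QS2 [*] fgen QS2 [-] fsmul (u * u) (fgen V2),
      fgen QS3 [*] fgen QS3 [-] fsmul (u * u) (fgen V3)}"

end

theory Submission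
  imports Defs
begin

text \<open>Both algebras are presented by generators and relations over F, so it suffices to give
  substitutions of the generators in both directions that send relations to zero and are
  mutually inverse modulo the relations.

  Every z in L is a + b u with a, b in F. Sending z e_i (i = 2, 3) to a e_i + b s_i identifies
  L e_i with the subalgebra of Lambda spanned by e_i and the loop s_i, because s_i^2 = u^2 e_i.
  The arrows beta_0 and beta_1 go to (beta \<plusminus> u^-2 s_2 beta s_3) / 2, the parts of beta that
  commute, respectively anticommute, with the loops; this matches the twist of A_beta_1 by theta,
  as theta u = - u. Conversely beta goes to beta_0 + beta_1 and s_i to u e_i. Under these maps
  the zero relations (beta_0 + beta_1) gamma and alpha (beta_0 + beta_1) of Lambda' become
  beta gamma and alpha beta, and the two relations involving gamma alpha together say that
  gamma alpha vanishes.\<close>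

section \<open>Free algebras over a subfield\<close>

lemma sum_atMost_triangle_swap:
  fixes f :: "nat \<Rightarrow> nat \<Rightarrow> 'b::comm_monoid_add"
  shows "(\<Sum>i\<le>n. \<Sum>j\<le>i. f j i) = (\<Sum>j\<le>n. \<Sum>i\<in>{j..n}. f j i)"
proof (induction n)
  case 0 then show ?case by simp
next
  case (Suc n)
  have "(\<Sum>j\<le>Suc n. \<Sum>i\<in>{j..Suc n}. f j i) =
        (\<Sum>j\<le>n. \<Sum>i\<in>{j..Suc n}. f j i) + f (Suc n) (Suc n)" by simp
  also have "(\<Sum>j\<le>n. \<Sum>i\<in>{j..Suc n}. f j i) = (\<Sum>j\<le>n. (\<Sum>i\<in>{j..n}. f j i) + f j (Suc n))"
    by (rule sum.cong) (auto simp: sum.atLeast_Suc_atMost_Suc_shift add.commute)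
  finally show ?case using Suc by (simp add: sum.distrib add.assoc)
qed

lemma fmul_assoc:
  fixes p q r :: "'g list \<Rightarrow> 'b::field"
  shows "(p [*] q) [*] r = p [*] (q [*] r)"
proof (rule ext)
  fix w :: "'g list"
  let ?n = "length w"
  have "((p [*] q) [*] r) w = (\<Sum>i\<le>?n. \<Sum>j\<le>i. p (take j w) * q (drop j (take i w)) * r (drop i w))"
    by (auto simp: fmul_def sum_distrib_right min_def intro!: sum.cong)
  also have "\<dots> = (\<Sum>j\<le>?n. \<Sum>i\<in>{j..?n}. p (take j w) * q (drop j (take i w)) * r (drop i w))"
    by (rule sum_atMost_triangle_swap)
  also have "\<dots> = (p [*] (q [*] r)) w"
    unfolding fmul_def sum_distrib_left
  proof (rule sum.cong[OF refl])
    fix j assume j: "j \<in> {..?n}"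
    have "(\<Sum>k\<le>length (drop j w). p (take j w) * (q (take k (drop j w)) * r (drop k (drop j w))))
        = (\<Sum>k\<le>?n - j. p (take j w) * (q (drop j (take (k + j) w)) * r (drop (k + j) w)))"
      by (simp add: take_drop add.commute)
    also have "\<dots> = (\<Sum>i\<in>{j..?n}. p (take j w) * q (drop j (take i w)) * r (drop i w))"
      using j
      by (intro sum.reindex_bij_witness[where i="\<lambda>i. i - j" and j="\<lambda>k. k + j"]) (auto simp: mult.assoc)
    finally show "(\<Sum>i\<in>{j..?n}. p (take j w) * q (drop j (take i w)) * r (drop i w)) =
        (\<Sum>k\<le>length (drop j w). p (take j w) * (q (take k (drop j w)) * r (drop k (drop j w))))"
      by simp
  qed
  finally show "((p [*] q) [*] r) w = (p [*] (q [*] r)) w" .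
qed

lemma fmul_fadd_distrib_left: "p [*] (q [+] r) = (p [*] q) [+] (p [*] r)"
  by (auto simp: fmul_def fadd_def distrib_left sum.distrib)

lemma fmul_fadd_distrib_right: "(p [+] q) [*] r = (p [*] r) [+] (q [*] r)"
  by (auto simp: fmul_def fadd_def distrib_right sum.distrib)

lemma fscal_fmul: "fscal c [*] p = fsmul c p"
proof (rule ext)
  fix w
  have "(fscal c [*] p) w = (\<Sum>i\<le>length w. if i = 0 then c * p w else 0)"
    unfolding fmul_def fscal_def by (rule sum.cong) auto
  then show "(fscal c [*] p) w = fsmul c p w" by (simp add: fsmul_def)
qed

lemma fmul_fscal: "p [*] fscal c = fsmul c p"
proof (rule ext)
  fix w
  have "(p [*] fscal c) w = (\<Sum>i\<le>length w. if i = length w then c * p w else 0)"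
    unfolding fmul_def fscal_def by (rule sum.cong) auto
  then show "(p [*] fscal c) w = fsmul c p w" by (simp add: fsmul_def)
qed

lemma fsmul_one [simp]: "fsmul 1 p = p"
  by (simp add: fsmul_def)

lemma fsmul_fmul: "fsmul c p [*] q = fsmul c (p [*] q)"
  by (simp add: fsmul_def fmul_def sum_distrib_left mult.assoc)

lemma fmul_fsmul: "p [*] fsmul c q = fsmul c (p [*] q)"
  by (simp add: fsmul_def fmul_def sum_distrib_left mult.left_commute)

lemma support_fmul_subset:
  "{w. (p [*] q) w \<noteq> 0} \<subseteq> (\<lambda>(x, y). x @ y) ` ({w. p w \<noteq> 0} \<times> {w. q w \<noteq> 0})"
proof
  fix w assume "w \<in> {w. (p [*] q) w \<noteq> 0}"
  then obtain i where "p (take i w) * q (drop i w) \<noteq> 0"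
    by (auto simp: fmul_def intro: sum.not_neutral_contains_not_neutral)
  then show "w \<in> (\<lambda>(x, y). x @ y) ` ({w. p w \<noteq> 0} \<times> {w. q w \<noteq> 0})"
    by (auto intro!: image_eqI[where x="(take i w, drop i w)"])
qed

lemma free_alg_simps [simp]:
  "carrier (free_alg F) = falg_carrier F" "mult (free_alg F) = fmul" "add (free_alg F) = fadd"
  "one (free_alg F) = fscal 1" "zero (free_alg F) = (\<lambda>w. 0)"
  by (simp_all add: free_alg_def)

locale subfield_set =
  fixes F :: "'a::field set"
  assumes is_subfield: "is_subfield F"
begin

lemma subfield_closed [simp]:
  "0 \<in> F" "1 \<in> F" "x \<in> F \<Longrightarrow> y \<in> F \<Longrightarrow> x + y \<in> F" "x \<in> F \<Longrightarrow> y \<in> F \<Longrightarrow> x * y \<in> F"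
  "x \<in> F \<Longrightarrow> - x \<in> F" "x \<in> F \<Longrightarrow> inverse x \<in> F"
  "x \<in> F \<Longrightarrow> y \<in> F \<Longrightarrow> x - y \<in> F" "x \<in> F \<Longrightarrow> y \<in> F \<Longrightarrow> x / y \<in> F"
  using is_subfield unfolding is_subfield_def diff_conv_add_uminus divide_inverse by blast+

lemma two_in_subfield [simp]: "2 \<in> F" "1 / 2 \<in> F"
  using subfield_closed(3)[of 1 1] by (simp_all add: one_add_one)

lemma sum_in_subfield: "(\<And>x. x \<in> A \<Longrightarrow> f x \<in> F) \<Longrightarrow> sum f A \<in> F"
  by (induction A rule: infinite_finite_induct) auto

lemma falg_carrier_closed [simp]:
  "fgen x \<in> falg_carrier F"
  "c \<in> F \<Longrightarrow> fscal c \<in> falg_carrier F"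
  "p \<in> falg_carrier F \<Longrightarrow> q \<in> falg_carrier F \<Longrightarrow> p [*] q \<in> falg_carrier F"
  "p \<in> falg_carrier F \<Longrightarrow> q \<in> falg_carrier F \<Longrightarrow> p [+] q \<in> falg_carrier F"
  "p \<in> falg_carrier F \<Longrightarrow> q \<in> falg_carrier F \<Longrightarrow> p [-] q \<in> falg_carrier F"
  "c \<in> F \<Longrightarrow> p \<in> falg_carrier F \<Longrightarrow> fsmul c p \<in> falg_carrier F"
  "(\<lambda>w. 0) \<in> falg_carrier F"
proof -
  show "fgen x \<in> falg_carrier F"
    unfolding falg_carrier_def fgen_def by (auto intro: finite_subset[of _ "{[x]}"])
  show "c \<in> F \<Longrightarrow> fscal c \<in> falg_carrier F"
    unfolding falg_carrier_def fscal_def by (auto intro: finite_subset[of _ "{[]}"])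
  show "p [*] q \<in> falg_carrier F" if "p \<in> falg_carrier F" "q \<in> falg_carrier F"
  proof -
    have "finite {w. (p [*] q) w \<noteq> 0}"
      using that by (auto simp: falg_carrier_def intro: finite_subset[OF support_fmul_subset])
    moreover have "(p [*] q) w \<in> F" for w
      using that by (auto simp: falg_carrier_def fmul_def intro!: sum_in_subfield)
    ultimately show ?thesis by (simp add: falg_carrier_def)
  qed
  show "p \<in> falg_carrier F \<Longrightarrow> q \<in> falg_carrier F \<Longrightarrow> p [+] q \<in> falg_carrier F"
    unfolding falg_carrier_def fadd_def
    by (auto intro: finite_subset[of _ "{w. p w \<noteq> 0} \<union> {w. q w \<noteq> 0}"])
  show "p \<in> falg_carrier F \<Longrightarrow> q \<in> falg_carrier F \<Longrightarrow> p [-] q \<in> falg_carrier F"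
    unfolding falg_carrier_def fsub_def
    by (auto intro: finite_subset[of _ "{w. p w \<noteq> 0} \<union> {w. q w \<noteq> 0}"])
  show "c \<in> F \<Longrightarrow> p \<in> falg_carrier F \<Longrightarrow> fsmul c p \<in> falg_carrier F"
    unfolding falg_carrier_def fsmul_def by (auto intro: finite_subset[of _ "{w. p w \<noteq> 0}"])
  show "(\<lambda>w. 0) \<in> falg_carrier F"
    unfolding falg_carrier_def by simp
qed

lemma ring_free_alg: "ring (free_alg F)"
proof (rule ringI)
  show "abelian_group (free_alg F)"
  proof (rule abelian_groupI)
    fix x assume "x \<in> carrier (free_alg F)"
    then show "\<exists>y\<in>carrier (free_alg F). y \<oplus>\<^bsub>free_alg F\<^esub> x = \<zero>\<^bsub>free_alg F\<^esub>"
      using falg_carrier_closed(6)[of "-1" x] by (intro bexI[where x="fsmul (-1) x"]) (auto simp: fadd_def fsmul_def)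
  qed (auto simp: falg_carrier_closed(4)[unfolded fadd_def] fadd_def add.assoc add.commute)
  show "monoid (free_alg F)"
    by (rule monoidI) (auto simp: fmul_assoc fscal_fmul fmul_fscal)
qed (auto simp: fmul_fadd_distrib_left fmul_fadd_distrib_right)

end

section \<open>Substitution homomorphisms\<close>

fun subst_word :: "('g \<Rightarrow> 'h list \<Rightarrow> 'a::field) \<Rightarrow> 'g list \<Rightarrow> 'h list \<Rightarrow> 'a" where
  "subst_word \<phi> [] = fscal 1"
| "subst_word \<phi> (x # w) = \<phi> x [*] subst_word \<phi> w"

definition subst :: "('g \<Rightarrow> 'h list \<Rightarrow> 'a::field) \<Rightarrow> ('g list \<Rightarrow> 'a) \<Rightarrow> 'h list \<Rightarrow> 'a" where
  "subst \<phi> p = (\<lambda>v. \<Sum>w\<in>{w. p w \<noteq> 0}. p w * subst_word \<phi> w v)"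

definition fword :: "'g list \<Rightarrow> 'g list \<Rightarrow> 'a::field" where
  "fword w = (\<lambda>v. if v = w then 1 else 0)"

lemma subst_word_append: "subst_word \<phi> (a @ b) = subst_word \<phi> a [*] subst_word \<phi> b"
  by (induction a) (simp_all add: fscal_fmul fmul_assoc)

lemma fgen_fmul_fword: "fgen x [*] fword w = fword (x # w)"
proof (rule ext)
  fix v :: "'a list"
  show "(fgen x [*] fword w) v = (fword (x # w) :: 'a list \<Rightarrow> 'b::field) v"
  proof (cases v)
    case Nil then show ?thesis by (simp add: fmul_def fgen_def fword_def)
  next
    case (Cons y v')
    have "(fgen x [*] fword w) v = (\<Sum>i\<le>Suc (length v'). fgen x (take i v) * fword w (drop i v))"
      by (simp add: fmul_def Cons)
    also have "\<dots> = (\<Sum>i\<le>Suc (length v'). if i = 1 then (if y = x \<and> v' = w then 1 else 0) else 0)"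
      by (rule sum.cong) (auto simp: Cons fgen_def fword_def take_Cons' split: if_splits)
    also have "\<dots> = fword (x # w) v" by (subst sum.delta) (auto simp: Cons fword_def)
    finally show ?thesis .
  qed
qed

lemma fword_Nil: "fword [] = fscal 1"
  by (simp add: fword_def fscal_def fun_eq_iff)

lemma subst_superset:
  assumes "finite A" "{w. p w \<noteq> 0} \<subseteq> A"
  shows "subst \<phi> p = (\<lambda>v. \<Sum>w\<in>A. p w * subst_word \<phi> w v)"
  unfolding subst_def by (rule ext, rule sum.mono_neutral_left) (use assms in auto)

lemma fmul_sums:
  "(\<lambda>v. \<Sum>a\<in>A. f a v) [*] (\<lambda>v. \<Sum>b\<in>B. g b v) = (\<lambda>v. \<Sum>a\<in>A. \<Sum>b\<in>B. (f a [*] g b) v)"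
proof (rule ext)
  fix v
  have "((\<lambda>v. \<Sum>a\<in>A. f a v) [*] (\<lambda>v. \<Sum>b\<in>B. g b v)) v
      = (\<Sum>i\<le>length v. \<Sum>a\<in>A. \<Sum>b\<in>B. f a (take i v) * g b (drop i v))"
    unfolding fmul_def by (simp only: sum_product)
  also have "\<dots> = (\<Sum>a\<in>A. \<Sum>b\<in>B. \<Sum>i\<le>length v. f a (take i v) * g b (drop i v))"
    by (subst sum.swap) (rule sum.cong[OF refl], rule sum.swap)
  finally show "((\<lambda>v. \<Sum>a\<in>A. f a v) [*] (\<lambda>v. \<Sum>b\<in>B. g b v)) v = (\<Sum>a\<in>A. \<Sum>b\<in>B. (f a [*] g b) v)"
    by (simp add: fmul_def)
qed

lemma sum_splittings:
  fixes G :: "'g list \<times> 'g list \<Rightarrow> 'b::comm_monoid_add"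
  assumes "finite X" "finite Y" "\<And>a b. (a, b) \<notin> X \<times> Y \<Longrightarrow> G (a, b) = 0"
  shows "(\<Sum>w\<in>(\<lambda>(x, y). x @ y) ` (X \<times> Y). \<Sum>i\<le>length w. G (take i w, drop i w)) = (\<Sum>ab\<in>X \<times> Y. G ab)"
proof -
  define A where "A = (\<lambda>(x, y). x @ y) ` (X \<times> Y)"
  define cut where "cut = (\<lambda>wi :: 'g list \<times> nat. (take (snd wi) (fst wi), drop (snd wi) (fst wi)))"
  have fA: "finite A" using assms(1,2) by (simp add: A_def)
  have "(\<Sum>w\<in>A. \<Sum>i\<le>length w. G (take i w, drop i w)) = (\<Sum>wi\<in>Sigma A (\<lambda>w. {..length w}). G (cut wi))"
    using sum.Sigma[OF fA, of "\<lambda>w. {..length w}" "\<lambda>w i. G (take i w, drop i w)"]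
    by (simp add: split_def cut_def)
  also have "\<dots> = (\<Sum>ab\<in>cut ` Sigma A (\<lambda>w. {..length w}). G ab)"
    by (rule sum.reindex[symmetric, unfolded comp_def])
       (auto simp: inj_on_def cut_def, metis append_take_drop_id, metis length_take min_absorb2)
  also have "\<dots> = (\<Sum>ab\<in>X \<times> Y. G ab)"
  proof (rule sum.mono_neutral_right)
    show "X \<times> Y \<subseteq> cut ` Sigma A (\<lambda>w. {..length w})"
    proof
      fix ab assume "ab \<in> X \<times> Y"
      then obtain a b where "ab = (a, b)" "a \<in> X" "b \<in> Y" by auto
      then show "ab \<in> cut ` Sigma A (\<lambda>w. {..length w})"
        by (intro image_eqI[where x="(a @ b, length a)"]) (auto simp: A_def cut_def)
    qed
  qed (use fA assms(3) in auto)
  finally show ?thesis by (simp add: A_def)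
qed

lemma subst_fmul:
  assumes "finite {w. p w \<noteq> 0}" and "finite {w. q w \<noteq> 0}"
  shows "subst \<phi> (p [*] q) = subst \<phi> p [*] subst \<phi> q"
proof (rule ext)
  fix v
  define X where "X = {w. p w \<noteq> 0}"
  define Y where "Y = {w. q w \<noteq> 0}"
  define G where "G = (\<lambda>(a, b). p a * q b * subst_word \<phi> (a @ b) v)"
  have fin: "finite X" "finite Y" using assms by (simp_all add: X_def Y_def)
  have rhs: "subst \<phi> p [*] subst \<phi> q = (\<lambda>v. \<Sum>a\<in>X. \<Sum>b\<in>Y. p a * q b * subst_word \<phi> (a @ b) v)"
    unfolding subst_def X_def[symmetric] Y_def[symmetric] fmul_sums
    using fmul_fsmul[of "subst_word \<phi> _" "q _" "subst_word \<phi> _"] fsmul_fmul[of "p _" "subst_word \<phi> _"]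
    by (simp add: subst_word_append fsmul_def[symmetric] fsmul_fmul fmul_fsmul)
      (simp add: fsmul_def mult.assoc mult.left_commute)
  have sub: "{w. (p [*] q) w \<noteq> 0} \<subseteq> (\<lambda>(x, y). x @ y) ` (X \<times> Y)"
    unfolding X_def Y_def by (rule support_fmul_subset)
  have "subst \<phi> (p [*] q) v = (\<Sum>w\<in>(\<lambda>(x, y). x @ y) ` (X \<times> Y). \<Sum>i\<le>length w. G (take i w, drop i w))"
    unfolding subst_superset[OF finite_imageI[OF finite_cartesian_product[OF fin]] sub]
    by (simp add: fmul_def G_def sum_distrib_right)
  also have "\<dots> = (\<Sum>ab\<in>X \<times> Y. G ab)"
    by (rule sum_splittings[OF fin]) (auto simp: G_def X_def Y_def)
  also have "\<dots> = (subst \<phi> p [*] subst \<phi> q) v"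
    unfolding rhs G_def by (simp add: sum.cartesian_product)
  finally show "subst \<phi> (p [*] q) v = (subst \<phi> p [*] subst \<phi> q) v" .
qed

lemma subst_fadd:
  assumes "finite {w. p w \<noteq> 0}" and "finite {w. q w \<noteq> 0}"
  shows "subst \<phi> (p [+] q) = subst \<phi> p [+] subst \<phi> q"
proof -
  let ?A = "{w. p w \<noteq> 0} \<union> {w. q w \<noteq> 0}"
  have f: "finite ?A" using assms by simp
  have "subst \<phi> (p [+] q) = (\<lambda>v. \<Sum>w\<in>?A. (p [+] q) w * subst_word \<phi> w v)"
    by (rule subst_superset[OF f]) (auto simp: fadd_def)
  also have "\<dots> = subst \<phi> p [+] subst \<phi> q"
    by (subst (1 2) subst_superset[OF f]) (auto simp: fadd_def sum.distrib distrib_right)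
  finally show ?thesis .
qed

lemma subst_fscal [simp]: "subst \<phi> (fscal c) = fscal c"
proof -
  have "subst \<phi> (fscal c) = (\<lambda>v. \<Sum>w\<in>{[]}. fscal c w * subst_word \<phi> w v)"
    by (rule subst_superset) (auto simp: fscal_def)
  then show ?thesis by (simp add: fscal_def fun_eq_iff)
qed

lemma subst_fgen [simp]: "subst \<phi> (fgen x) = \<phi> x"
proof -
  have "subst \<phi> (fgen x) = (\<lambda>v. \<Sum>w\<in>{[x]}. fgen x w * subst_word \<phi> w v)"
    by (rule subst_superset) (auto simp: fgen_def)
  then show ?thesis by (simp add: fgen_def fmul_fscal)
qed

context subfield_set
begin

lemma falg_carrier_finite_support: "p \<in> falg_carrier F \<Longrightarrow> finite {w. p w \<noteq> 0}"
  by (simp add: falg_carrier_def)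

lemma sum_falg_closed:
  "(\<And>a. a \<in> A \<Longrightarrow> f a \<in> falg_carrier F) \<Longrightarrow> (\<lambda>v. \<Sum>a\<in>A. f a v) \<in> falg_carrier F"
proof (induction A rule: infinite_finite_induct)
  case (insert x A)
  then show ?case using falg_carrier_closed(4)[of "f x" "\<lambda>v. \<Sum>a\<in>A. f a v"] by (simp add: fadd_def)
qed simp_all

lemma subst_closed:
  assumes "\<And>x. \<phi> x \<in> falg_carrier F" and "p \<in> falg_carrier F"
  shows "subst \<phi> p \<in> falg_carrier F"
proof -
  have word: "subst_word \<phi> w \<in> falg_carrier F" for w
    by (induction w) (simp_all add: assms(1))
  have "(\<lambda>v. \<Sum>w\<in>{w. p w \<noteq> 0}. fsmul (p w) (subst_word \<phi> w) v) \<in> falg_carrier F"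
    by (intro sum_falg_closed falg_carrier_closed(6) word) (use assms(2) in \<open>simp add: falg_carrier_def\<close>)
  then show ?thesis by (simp add: subst_def fsmul_def)
qed

lemma subst_ring_hom:
  assumes "\<And>x. \<phi> x \<in> falg_carrier F"
  shows "subst \<phi> \<in> ring_hom (free_alg F) (free_alg F)"
  by (rule ring_hom_memI) (auto simp: subst_closed assms subst_fmul subst_fadd falg_carrier_finite_support)

lemma fword_closed: "fword w \<in> falg_carrier F"
  by (induction w) (simp_all add: fword_Nil flip: fgen_fmul_fword)

lemma falg_carrier_induct [consumes 1, case_names zero monomial]:
  fixes p :: "'g list \<Rightarrow> 'a"
  assumes "p \<in> falg_carrier F"
    and zero: "P (\<lambda>w. 0)"
    and monomial: "\<And>c w q. c \<in> F \<Longrightarrow> q \<in> falg_carrier F \<Longrightarrow> P q \<Longrightarrow> P (fscal c [*] fword w [+] q)"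
  shows "P p"
proof -
  have main: "\<forall>p\<in>falg_carrier F. {w. p w \<noteq> 0} \<subseteq> A \<longrightarrow> P p" if "finite A" for A
    using that
  proof (induction A rule: finite_induct)
    case empty
    show ?case
    proof (intro ballI impI)
      fix p :: "'g list \<Rightarrow> 'a" assume "{w. p w \<noteq> 0} \<subseteq> {}"
      then have "p = (\<lambda>w. 0)" by auto
      then show "P p" using zero by simp
    qed
  next
    case (insert a A)
    show ?case
    proof (intro ballI impI)
      fix p assume p: "p \<in> falg_carrier F" and supp: "{w. p w \<noteq> 0} \<subseteq> insert a A"
      define q where "q = p(a := 0)"
      have pa: "p a \<in> F" using p by (simp add: falg_carrier_def)
      have q: "q \<in> falg_carrier F"
        using p unfolding q_def falg_carrier_def by (auto intro: finite_subset[of _ "{w. p w \<noteq> 0}"])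
      moreover have "{w. q w \<noteq> 0} \<subseteq> A" using supp by (auto simp: q_def)
      ultimately have "P q" using insert.IH by blast
      have decomp: "p = fscal (p a) [*] fword a [+] q"
        by (auto simp: fscal_fmul fsmul_def fadd_def fword_def q_def fun_eq_iff)
      show "P p" by (subst decomp) (rule monomial[OF pa q \<open>P q\<close>])
    qed
  qed
  show ?thesis using main[of "{w. p w \<noteq> 0}"] assms(1) by (simp add: falg_carrier_finite_support)
qed

lemma free_alg_ring_hom_eqI:
  fixes h1 h2 :: "('g list \<Rightarrow> 'a) \<Rightarrow> 'c"
  assumes Q: "ring Q"
    and h1: "h1 \<in> ring_hom (free_alg F) Q" and h2: "h2 \<in> ring_hom (free_alg F) Q"
    and gen: "\<And>x. h1 (fgen x) = h2 (fgen x)"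
    and scal: "\<And>c. c \<in> F \<Longrightarrow> h1 (fscal c) = h2 (fscal c)"
    and p: "p \<in> falg_carrier F"
  shows "h1 p = h2 p"
proof -
  have word: "h1 (fword w) = h2 (fword w)" for w :: "'g list"
  proof (induction w)
    case Nil
    then show ?case using scal by (simp add: fword_Nil)
  next
    case (Cons x w)
    then show ?case
      using ring_hom_mult[OF h1, of "fgen x" "fword w"] ring_hom_mult[OF h2, of "fgen x" "fword w"]
      by (simp add: fword_closed gen flip: fgen_fmul_fword)
  qed
  show ?thesis
    using p
  proof (induction p rule: falg_carrier_induct)
    case zero
    then show ?case
      using ring_hom_zero[OF h1 ring_free_alg Q] ring_hom_zero[OF h2 ring_free_alg Q] by simp
  next
    case (monomial c w q)
    then show ?case
      using ring_hom_add[OF h1, of "fscal c [*] fword w" q] ring_hom_add[OF h2, of "fscal c [*] fword w" q]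
        ring_hom_mult[OF h1, of "fscal c" "fword w"] ring_hom_mult[OF h2, of "fscal c" "fword w"]
      by (simp add: fword_closed scal word)
  qed
qed

lemma ideal_genideal_free_alg:
  "S \<subseteq> falg_carrier F \<Longrightarrow> ideal (genideal (free_alg F) S) (free_alg F)"
  by (rule ring.genideal_ideal[OF ring_free_alg]) simp

lemma ring_presented: "S \<subseteq> falg_carrier F \<Longrightarrow> ring (presented F S)"
  unfolding presented_def by (rule ideal.quotient_is_ring[OF ideal_genideal_free_alg])

lemma pclass_ring_hom: "S \<subseteq> falg_carrier F \<Longrightarrow> pclass F S \<in> ring_hom (free_alg F) (presented F S)"
  using ideal.rcos_ring_hom[OF ideal_genideal_free_alg]
  by (simp add: presented_def pclass_def[abs_def])

lemma carrier_presented: "carrier (presented F S) = pclass F S ` falg_carrier F"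
  by (auto simp: presented_def pclass_def FactRing_def A_RCOSETS_def')

lemma pclass_eq_zero_iff:
  assumes "S \<subseteq> falg_carrier F" and "p \<in> falg_carrier F"
  shows "pclass F S p = \<zero>\<^bsub>presented F S\<^esub> \<longleftrightarrow> p \<in> genideal (free_alg F) S"
proof -
  interpret ideal "genideal (free_alg F) S" "free_alg F"
    by (rule ideal_genideal_free_alg[OF assms(1)])
  have "p \<in> genideal (free_alg F) S +>\<^bsub>free_alg F\<^esub> p"
    using a_rcos_self[of p] assms(2) by simp
  then show ?thesis
    using a_rcos_const[of p] by (auto simp: pclass_def presented_def FactRing_def)
qed

lemma pclass_rel: "S \<subseteq> falg_carrier F \<Longrightarrow> r \<in> S \<Longrightarrow> pclass F S r = \<zero>\<^bsub>presented F S\<^esub>"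
  by (subst pclass_eq_zero_iff) (use ring.genideal_self[OF ring_free_alg] in auto)

lemma genideal_subset_kernel:
  assumes Q: "ring Q" and h: "h \<in> ring_hom (free_alg F) Q"
    and S: "S \<subseteq> falg_carrier F" and rel: "\<And>r. r \<in> S \<Longrightarrow> h r = \<zero>\<^bsub>Q\<^esub>"
  shows "genideal (free_alg F) S \<subseteq> a_kernel (free_alg F) Q h"
proof (rule ring.genideal_minimal[OF ring_free_alg])
  show "ideal (a_kernel (free_alg F) Q h) (free_alg F)"
    by (rule ring_hom_ring.kernel_is_ideal[OF ring_hom_ringI2[OF ring_free_alg Q h]])
  show "S \<subseteq> a_kernel (free_alg F) Q h"
    using S rel by (auto simp: a_kernel_def')
qed

lemma pclass_subst_ring_hom:
  "S \<subseteq> falg_carrier F \<Longrightarrow> (\<And>x. \<phi> x \<in> falg_carrier F) \<Longrightarrow>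
    pclass F S \<circ> subst \<phi> \<in> ring_hom (free_alg F) (presented F S)"
  by (rule ring_hom_trans[OF subst_ring_hom pclass_ring_hom])

lemma pclass_subst_roundtrip:
  assumes S: "S \<subseteq> falg_carrier F"
    and \<phi>: "\<And>x. \<phi> x \<in> falg_carrier F" and \<psi>: "\<And>y. \<psi> y \<in> falg_carrier F"
    and \<psi>\<phi>: "\<And>x. pclass F S (subst \<psi> (\<phi> x)) = pclass F S (fgen x)"
    and p: "p \<in> falg_carrier F"
  shows "pclass F S (subst \<psi> (subst \<phi> p)) = pclass F S p"
proof -
  have "((pclass F S \<circ> subst \<psi>) \<circ> subst \<phi>) p = pclass F S p"
    by (rule free_alg_ring_hom_eqI[OF ring_presented[OF S]
          ring_hom_trans[OF subst_ring_hom[OF \<phi>] pclass_subst_ring_hom[OF S \<psi>]]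
          pclass_ring_hom[OF S] _ _ p])
      (simp_all add: \<psi>\<phi>)
  then show ?thesis by simp
qed

lemma kernel_pclass_subst_subset:
  assumes S: "S \<subseteq> falg_carrier F" and T: "T \<subseteq> falg_carrier F"
    and \<phi>: "\<And>x. \<phi> x \<in> falg_carrier F" and \<psi>: "\<And>y. \<psi> y \<in> falg_carrier F"
    and \<psi>_rel: "\<And>r. r \<in> T \<Longrightarrow> pclass F S (subst \<psi> r) = \<zero>\<^bsub>presented F S\<^esub>"
    and \<psi>\<phi>: "\<And>x. pclass F S (subst \<psi> (\<phi> x)) = pclass F S (fgen x)"
  shows "a_kernel (free_alg F) (presented F T) (pclass F T \<circ> subst \<phi>) \<subseteq> genideal (free_alg F) S"
proof
  fix p assume "p \<in> a_kernel (free_alg F) (presented F T) (pclass F T \<circ> subst \<phi>)"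
  then have p: "p \<in> falg_carrier F" and "pclass F T (subst \<phi> p) = \<zero>\<^bsub>presented F T\<^esub>"
    by (auto simp: a_kernel_def')
  then have "subst \<phi> p \<in> genideal (free_alg F) T"
    using pclass_eq_zero_iff[OF T subst_closed[OF \<phi> p]] by simp
  also have "\<dots> \<subseteq> a_kernel (free_alg F) (presented F S) (pclass F S \<circ> subst \<psi>)"
    by (rule genideal_subset_kernel[OF ring_presented[OF S] pclass_subst_ring_hom[OF S \<psi>] T])
      (simp add: \<psi>_rel)
  finally have "pclass F S (subst \<psi> (subst \<phi> p)) = \<zero>\<^bsub>presented F S\<^esub>"
    by (simp add: a_kernel_def')
  then show "p \<in> genideal (free_alg F) S"
    using pclass_subst_roundtrip[OF S \<phi> \<psi> \<psi>\<phi> p] by (simp add: pclass_eq_zero_iff S p)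
qed

theorem F_alg_iso_by_substitutions:
  fixes S :: "('g list \<Rightarrow> 'a) set" and T :: "('h list \<Rightarrow> 'a) set"
  assumes S: "S \<subseteq> falg_carrier F" and T: "T \<subseteq> falg_carrier F"
    and \<phi>: "\<And>x. \<phi> x \<in> falg_carrier F" and \<psi>: "\<And>y. \<psi> y \<in> falg_carrier F"
    and \<phi>_rel: "\<And>r. r \<in> S \<Longrightarrow> pclass F T (subst \<phi> r) = \<zero>\<^bsub>presented F T\<^esub>"
    and \<psi>_rel: "\<And>r. r \<in> T \<Longrightarrow> pclass F S (subst \<psi> r) = \<zero>\<^bsub>presented F S\<^esub>"
    and \<psi>\<phi>: "\<And>x. pclass F S (subst \<psi> (\<phi> x)) = pclass F S (fgen x)"
    and \<phi>\<psi>: "\<And>y. pclass F T (subst \<phi> (\<psi> y)) = pclass F T (fgen y)"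
  shows "F_alg_iso F S T"
proof -
  define f where "f = pclass F T \<circ> subst \<phi>"
  have f: "f \<in> ring_hom (free_alg F) (presented F T)"
    unfolding f_def by (rule pclass_subst_ring_hom[OF T \<phi>])
  have f_ring: "ring_hom_ring (free_alg F) (presented F T) f"
    by (rule ring_hom_ringI2[OF ring_free_alg ring_presented[OF T] f])
  have ker: "a_kernel (free_alg F) (presented F T) f = genideal (free_alg F) S"
  proof
    show "genideal (free_alg F) S \<subseteq> a_kernel (free_alg F) (presented F T) f"
      by (rule genideal_subset_kernel[OF ring_presented[OF T] f S]) (simp add: f_def \<phi>_rel)
    show "a_kernel (free_alg F) (presented F T) f \<subseteq> genideal (free_alg F) S"
      unfolding f_def by (rule kernel_pclass_subst_subset[OF S T \<phi> \<psi> \<psi>_rel \<psi>\<phi>])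
  qed
  have "f ` falg_carrier F = carrier (presented F T)"
  proof
    show "f ` falg_carrier F \<subseteq> carrier (presented F T)"
      using ring_hom_closed[OF f] by auto
    show "carrier (presented F T) \<subseteq> f ` falg_carrier F"
      unfolding carrier_presented
      using pclass_subst_roundtrip[OF T \<psi> \<phi> \<phi>\<psi>] subst_closed[OF \<psi>] by (force simp: f_def)
  qed
  then have iso: "(\<lambda>X. the_elem (f ` X)) \<in> ring_iso (presented F S) (presented F T)"
    using ring_hom_ring.FactRing_iso_set[OF f_ring] ker by (simp add: presented_def)
  have scal: "the_elem (f ` pclass F S (fscal c)) = pclass F T (fscal c)" if "c \<in> F" for c
    using ring_hom_ring.the_elem_simp[OF f_ring, of "fscal c"] that ker
    by (simp add: pclass_def f_def)
  show ?thesis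
    unfolding F_alg_iso_def by (rule bexI[OF _ iso]) (simp add: scal)
qed

end

locale F_algebra = ring Q + subfield_set F
  for Q :: "('c, 'm) ring_scheme" (structure) and F :: "'a::field set" +
  fixes \<kappa> :: "'a \<Rightarrow> 'c"
  assumes scal_closed [simp]: "c \<in> F \<Longrightarrow> \<kappa> c \<in> carrier Q"
    and scal_add: "a \<in> F \<Longrightarrow> b \<in> F \<Longrightarrow> \<kappa> (a + b) = \<kappa> a \<oplus> \<kappa> b"
    and scal_mult: "a \<in> F \<Longrightarrow> b \<in> F \<Longrightarrow> \<kappa> (a * b) = \<kappa> a \<otimes> \<kappa> b"
    and scal_one: "\<kappa> 1 = \<one>"
    and scal_central: "c \<in> F \<Longrightarrow> x \<in> carrier Q \<Longrightarrow> \<kappa> c \<otimes> x = x \<otimes> \<kappa> c"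
begin

lemma scal_zero: "\<kappa> 0 = \<zero>"
  using scal_add[of 0 0] add.l_cancel_one'[of "\<kappa> 0" "\<kappa> 0"] by simp

lemma scal_neg: "a \<in> F \<Longrightarrow> \<kappa> (- a) = \<ominus> \<kappa> a"
  using scal_add[of "- a" a] by (intro minus_equality[symmetric]) (simp_all add: scal_zero)

lemma scal_mult_assoc: "a \<in> F \<Longrightarrow> b \<in> F \<Longrightarrow> x \<in> carrier Q \<Longrightarrow> \<kappa> a \<otimes> (\<kappa> b \<otimes> x) = \<kappa> (a * b) \<otimes> x"
  by (simp add: scal_mult m_assoc)

lemma mult_scal_commute:
  assumes "b \<in> F" "x \<in> carrier Q" "y \<in> carrier Q"
  shows "x \<otimes> (\<kappa> b \<otimes> y) = \<kappa> b \<otimes> (x \<otimes> y)"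
  using assms by (simp add: m_assoc[symmetric] scal_central[of b x])

lemma scal_neg_mult: "a \<in> F \<Longrightarrow> x \<in> carrier Q \<Longrightarrow> \<kappa> (- a) \<otimes> x = \<ominus> (\<kappa> a \<otimes> x)"
  by (simp add: scal_neg l_minus)

lemma add_self_eq_scal_two:
  assumes "x \<in> carrier Q"
  shows "x \<oplus> x = \<kappa> 2 \<otimes> x"
proof -
  have "\<kappa> 2 = \<kappa> 1 \<oplus> \<kappa> 1" using scal_add[of 1 1] by simp
  then show ?thesis using assms by (simp add: scal_one l_distr)
qed

context
  assumes two: "(2::'a) \<noteq> 0"
begin

lemma scal_half_add_self: "x \<in> carrier Q \<Longrightarrow> \<kappa> (1/2) \<otimes> (x \<oplus> x) = x"
  using scal_mult_assoc[of "1/2" 2 x] two by (simp add: add_self_eq_scal_two scal_one)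

lemma scal_half_sum_diff:
  assumes x: "x \<in> carrier Q" and y: "y \<in> carrier Q"
  shows "\<kappa> (1/2) \<otimes> (x \<oplus> y) \<oplus> \<kappa> (1/2) \<otimes> (x \<ominus> y) = x"
proof -
  have eq: "(x \<oplus> y) \<oplus> (x \<ominus> y) = x \<oplus> x" using x y by (simp add: minus_eq a_ac r_neg)
  have "\<kappa> (1/2) \<otimes> (x \<oplus> y) \<oplus> \<kappa> (1/2) \<otimes> (x \<ominus> y) = \<kappa> (1/2) \<otimes> ((x \<oplus> y) \<oplus> (x \<ominus> y))"
    using x y by (simp add: r_distr)
  also have "\<dots> = x" unfolding eq by (rule scal_half_add_self[OF x])
  finally show ?thesis .
qed

lemma scal_half_diff_diff:
  assumes x: "x \<in> carrier Q" and y: "y \<in> carrier Q"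
  shows "\<kappa> (1/2) \<otimes> ((x \<oplus> y) \<ominus> (x \<ominus> y)) = y"
proof -
  have "(x \<oplus> y) \<ominus> (x \<ominus> y) = (y \<oplus> y) \<oplus> (x \<oplus> \<ominus> x)"
    using x y by (simp add: minus_eq minus_add a_ac)
  also have "\<dots> = y \<oplus> y" using x y by (simp add: r_neg)
  finally show ?thesis using scal_half_add_self[OF y] by (simp only:)
qed

end

end

locale free_alg_hom = subfield_set F + Q: ring Q
  for F :: "'a::field set" and Q :: "('c, 'm) ring_scheme" +
  fixes h :: "('g list \<Rightarrow> 'a) \<Rightarrow> 'c"
  assumes ring_hom: "h \<in> ring_hom (free_alg F) Q"
begin

lemma hom_closed: "p \<in> falg_carrier F \<Longrightarrow> h p \<in> carrier Q"
  using ring_hom_closed[OF ring_hom, of p] by simp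

lemma hom_fmul: "p \<in> falg_carrier F \<Longrightarrow> q \<in> falg_carrier F \<Longrightarrow> h (p [*] q) = h p \<otimes>\<^bsub>Q\<^esub> h q"
  using ring_hom_mult[OF ring_hom, of p q] by simp

lemma hom_fadd: "p \<in> falg_carrier F \<Longrightarrow> q \<in> falg_carrier F \<Longrightarrow> h (p [+] q) = h p \<oplus>\<^bsub>Q\<^esub> h q"
  using ring_hom_add[OF ring_hom, of p q] by simp

lemma hom_fsub:
  assumes "p \<in> falg_carrier F" "q \<in> falg_carrier F"
  shows "h (p [-] q) = h p \<ominus>\<^bsub>Q\<^esub> h q"
proof -
  have "p = (p [-] q) [+] q" by (simp add: fsub_def fadd_def)
  then have "h p = h (p [-] q) \<oplus>\<^bsub>Q\<^esub> h q"
    using hom_fadd[of "p [-] q" q] assms by simp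
  then show ?thesis
    using Q.add.inv_solve_right[of "h (p [-] q)" "h p" "h q"] assms by (simp add: Q.minus_eq hom_closed)
qed

lemma hom_fsmul: "c \<in> F \<Longrightarrow> p \<in> falg_carrier F \<Longrightarrow> h (fsmul c p) = h (fscal c) \<otimes>\<^bsub>Q\<^esub> h p"
  using hom_fmul[of "fscal c" p] by (simp add: fscal_fmul)

lemma hom_zero: "h (\<lambda>w. 0) = \<zero>\<^bsub>Q\<^esub>"
  using ring_hom_zero[OF ring_hom ring_free_alg Q.ring_axioms] by simp

lemma hom_one: "h (fscal 1) = \<one>\<^bsub>Q\<^esub>"
  using ring_hom_one[OF ring_hom] by simp

lemma hom_fsub_eq_zero_iff:
  "p \<in> falg_carrier F \<Longrightarrow> q \<in> falg_carrier F \<Longrightarrow> h (p [-] q) = \<zero>\<^bsub>Q\<^esub> \<longleftrightarrow> h p = h q"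
  using Q.add.inv_solve_right'[of "\<zero>\<^bsub>Q\<^esub>" "h p" "h q"] by (simp add: Q.minus_eq hom_closed hom_fsub)

end

context subfield_set
begin

lemma free_alg_hom_pclass:
  "S \<subseteq> falg_carrier F \<Longrightarrow> free_alg_hom F (presented F S) (pclass F S)"
  by (intro free_alg_hom.intro free_alg_hom_axioms.intro subfield_set_axioms ring_presented
      pclass_ring_hom)

lemma F_algebra_presented:
  fixes S :: "('g list \<Rightarrow> 'a) set"
  assumes S: "S \<subseteq> falg_carrier F"
  shows "F_algebra (presented F S) F (\<lambda>c. pclass F S (fscal c))"
proof -
  interpret free_alg_hom F "presented F S" "pclass F S"
    by (rule free_alg_hom_pclass[OF S])
  show ?thesis
  proof (intro F_algebra.intro F_algebra_axioms.intro subfield_set_axioms ring_presented S)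
    fix a b assume ab: "a \<in> F" "b \<in> F"
    have "(fscal (a + b) :: 'g list \<Rightarrow> 'a) = fscal a [+] fscal b"
      by (auto simp: fscal_def fadd_def fun_eq_iff)
    then show "pclass F S (fscal (a + b)) = pclass F S (fscal a) \<oplus>\<^bsub>presented F S\<^esub> pclass F S (fscal b)"
      using ab by (simp add: hom_fadd)
    have "(fscal (a * b) :: 'g list \<Rightarrow> 'a) = fscal a [*] fscal b"
      by (simp only: fscal_fmul) (simp add: fscal_def fsmul_def fun_eq_iff)
    then show "pclass F S (fscal (a * b)) = pclass F S (fscal a) \<otimes>\<^bsub>presented F S\<^esub> pclass F S (fscal b)"
      using ab by (simp add: hom_fmul)
  next
    fix c x assume c: "c \<in> F" and "x \<in> carrier (presented F S)"
    then obtain p where p: "p \<in> falg_carrier F" and x: "x = pclass F S p"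
      by (auto simp: carrier_presented)
    have "fscal c [*] p = p [*] fscal c" by (simp add: fscal_fmul fmul_fscal)
    then show "pclass F S (fscal c) \<otimes>\<^bsub>presented F S\<^esub> x = x \<otimes>\<^bsub>presented F S\<^esub> pclass F S (fscal c)"
      using hom_fmul[of "fscal c" p] hom_fmul[of p "fscal c"] c p x by simp
  qed (simp_all add: hom_closed hom_one)
qed

lemma free_alg_hom_pclass_subst:
  assumes "S \<subseteq> falg_carrier F" and "\<And>x. \<phi> x \<in> falg_carrier F"
  shows "free_alg_hom F (presented F S) (pclass F S \<circ> subst \<phi>)"
  by (intro free_alg_hom.intro free_alg_hom_axioms.intro subfield_set_axioms ring_presented
      pclass_subst_ring_hom assms)

end

section \<open>Coordinates in a quadratic extension\<close>

locale deg2 =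
  fixes F :: "'a::field set" and \<theta> :: "'a \<Rightarrow> 'a" and u :: 'a
  assumes deg2_datum: "deg2_datum F \<theta> u"
begin

sublocale subfield_set F
  using deg2_datum by (simp add: deg2_datum_def subfield_set_def)

lemma two_nonzero: "(2::'a) \<noteq> 0"
  and u_nonzero: "u \<noteq> 0"
  and theta_u: "\<theta> u = - u"
  and theta_add: "\<theta> (x + y) = \<theta> x + \<theta> y"
  and theta_mult: "\<theta> (x * y) = \<theta> x * \<theta> y"
  and theta_fixes: "c \<in> F \<Longrightarrow> \<theta> c = c"
  using deg2_datum by (simp_all add: deg2_datum_def galois_elt_def)

lemma eq_neg_self_iff: "(x::'a) = - x \<longleftrightarrow> x = 0"
  using two_nonzero by (auto simp: eq_neg_iff_add_eq_0 simp flip: mult_2)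

lemma u_notin_F: "u \<notin> F"
  using theta_fixes[of u] theta_u u_nonzero eq_neg_self_iff[of u] by auto

lemma coords_unique:
  assumes "a \<in> F" "b \<in> F" "a' \<in> F" "b' \<in> F" "a + b * u = a' + b' * u"
  shows "a = a' \<and> b = b'"
proof (cases "b = b'")
  case False
  have "(b - b') * u = a' - a" using assms(5) by (simp add: algebra_simps)
  then have "u = (a' - a) / (b - b')" using False by (simp add: field_simps)
  then show ?thesis using u_notin_F assms(1-4) by simp
qed (use assms in simp)

lemma degree_two_spanning_pair:
  obtains b1 b2 where "\<And>x. \<exists>c d. c \<in> F \<and> d \<in> F \<and> x = c * b1 + d * b2"
proof -
  obtain b1 b2 where unique_coords: "\<forall>x. \<exists>!cd. cd \<in> F \<times> F \<and> x = fst cd * b1 + snd cd * b2"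
    using deg2_datum by (auto simp: deg2_datum_def degree_two_def)
  have "\<exists>c d. c \<in> F \<and> d \<in> F \<and> x = c * b1 + d * b2" for x
  proof -
    obtain cd where "cd \<in> F \<times> F \<and> x = fst cd * b1 + snd cd * b2" using unique_coords by blast
    then show ?thesis by (intro exI[of _ "fst cd"] exI[of _ "snd cd"]) (simp add: mem_Times_iff)
  qed
  then show ?thesis by (rule that)
qed

text \<open>Otherwise u would be an F-multiple of 1.\<close>
lemma coords_det_nonzero:
  assumes "a1 \<in> F" "a2 \<in> F" "c1 \<in> F" "c2 \<in> F"
    and one: "1 = a1 * b1 + a2 * b2" and u: "u = c1 * b1 + c2 * b2"
  shows "a1 * c2 - a2 * c1 \<noteq> 0"
proof
  assume det: "a1 * c2 - a2 * c1 = 0"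
  have "a1 * u - c1 * (a1 * b1 + a2 * b2) = b2 * (a1 * c2 - a2 * c1)"
    and "a2 * u - c2 * (a1 * b1 + a2 * b2) = - (b1 * (a1 * c2 - a2 * c1))"
    unfolding u by (simp_all add: algebra_simps)
  then have "a1 * u = c1" "a2 * u = c2" using det by (simp_all flip: one)
  moreover have "a1 \<noteq> 0 \<or> a2 \<noteq> 0" using one by auto
  ultimately have "u = c1 / a1 \<or> u = c2 / a2" by (auto simp: field_simps)
  then show False using u_notin_F assms(1-4) by auto
qed

lemma exists_coords: "\<exists>a b. a \<in> F \<and> b \<in> F \<and> z = a + b * u"
proof -
  obtain b1 b2 where basis: "\<And>x. \<exists>c d. c \<in> F \<and> d \<in> F \<and> x = c * b1 + d * b2"
    using degree_two_spanning_pair by blast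
  obtain a1 a2 where a: "a1 \<in> F" "a2 \<in> F" "1 = a1 * b1 + a2 * b2" using basis[of 1] by blast
  obtain c1 c2 where c: "c1 \<in> F" "c2 \<in> F" "u = c1 * b1 + c2 * b2" using basis[of u] by blast
  obtain x1 x2 where x: "x1 \<in> F" "x2 \<in> F" "z = x1 * b1 + x2 * b2" using basis[of z] by blast
  define D where "D = a1 * c2 - a2 * c1"
  have D: "D \<noteq> 0" unfolding D_def by (rule coords_det_nonzero[OF a(1,2) c(1,2) a(3) c(3)])
  have "(x1 * c2 - x2 * c1) * (a1 * b1 + a2 * b2) + (x2 * a1 - x1 * a2) * (c1 * b1 + c2 * b2)
      = D * (x1 * b1 + x2 * b2)"
    by (simp add: D_def algebra_simps)
  then have "(x1 * c2 - x2 * c1) * 1 + (x2 * a1 - x1 * a2) * u = D * z"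
    by (simp only: a(3)[symmetric] c(3)[symmetric] x(3)[symmetric])
  then have "z = ((x1 * c2 - x2 * c1) + (x2 * a1 - x1 * a2) * u) / D"
    using D by (simp add: eq_divide_eq mult.commute)
  then have "z = (x1 * c2 - x2 * c1) / D + ((x2 * a1 - x1 * a2) / D) * u"
    by (simp add: add_divide_distrib)
  moreover have "(x1 * c2 - x2 * c1) / D \<in> F" "(x2 * a1 - x1 * a2) / D \<in> F"
    using a(1,2) c(1,2) x(1,2) by (simp_all add: D_def)
  ultimately show ?thesis by blast
qed

lemma theta_coords: "a \<in> F \<Longrightarrow> b \<in> F \<Longrightarrow> \<theta> (a + b * u) = a + (- b) * u"
  by (simp add: theta_add theta_mult theta_fixes theta_u)

text \<open>u^2 is fixed by theta, so its u-coordinate vanishes.\<close>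
lemma u_square_in_F: "u * u \<in> F"
proof -
  obtain a b where ab: "a \<in> F" "b \<in> F" "u * u = a + b * u" using exists_coords by blast
  have "\<theta> (u * u) = u * u" by (simp add: theta_mult theta_u)
  then have "a + (- b) * u = a + b * u" using theta_coords[OF ab(1,2)] ab(3) by simp
  then have "b = 0" using coords_unique[of a "- b" a b] ab eq_neg_self_iff[of b] by auto
  then show ?thesis using ab by simp
qed

definition coord0 :: "'a \<Rightarrow> 'a" where
  "coord0 z = fst (SOME p. fst p \<in> F \<and> snd p \<in> F \<and> z = fst p + snd p * u)"

definition coord1 :: "'a \<Rightarrow> 'a" where
  "coord1 z = snd (SOME p. fst p \<in> F \<and> snd p \<in> F \<and> z = fst p + snd p * u)"

lemma coords: "coord0 z \<in> F" "coord1 z \<in> F" "coord0 z + coord1 z * u = z"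
proof -
  obtain a b where "a \<in> F \<and> b \<in> F \<and> z = a + b * u" using exists_coords by blast
  then have "\<exists>p. fst p \<in> F \<and> snd p \<in> F \<and> z = fst p + snd p * u" by (intro exI[of _ "(a, b)"]) simp
  from someI_ex[OF this] show "coord0 z \<in> F" "coord1 z \<in> F" "coord0 z + coord1 z * u = z"
    unfolding coord0_def coord1_def by simp_all
qed

lemma coords_eq: "a \<in> F \<Longrightarrow> b \<in> F \<Longrightarrow> coord0 (a + b * u) = a \<and> coord1 (a + b * u) = b"
  using coords_unique[of "coord0 (a + b * u)" "coord1 (a + b * u)" a b] coords[of "a + b * u"] by auto

lemma coords_of_F: "c \<in> F \<Longrightarrow> coord0 c = c \<and> coord1 c = 0"
  using coords_eq[of c 0] by simp

lemma coords_one: "coord0 1 = 1" "coord1 1 = 0"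
  using coords_of_F[of 1] by auto

lemma coords_u: "coord0 u = 0" "coord1 u = 1"
  using coords_eq[of 0 1] by auto

lemma coords_inverse_u: "coord0 (inverse u) = 0" "coord1 (inverse u) = inverse (u * u)"
proof -
  have e: "inverse u = 0 + inverse (u * u) * u" using u_nonzero by (simp add: field_simps)
  have "coord0 (0 + inverse (u * u) * u) = 0 \<and> coord1 (0 + inverse (u * u) * u) = inverse (u * u)"
    by (rule coords_eq[OF subfield_closed(1) subfield_closed(6)[OF u_square_in_F]])
  then show "coord0 (inverse u) = 0" "coord1 (inverse u) = inverse (u * u)"
    by (simp_all only: e[symmetric])
qed

lemma coords_add: "coord0 (z + w) = coord0 z + coord0 w" "coord1 (z + w) = coord1 z + coord1 w"
proof -
  have "z + w = (coord0 z + coord0 w) + (coord1 z + coord1 w) * u"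
    using coords(3)[of z] coords(3)[of w] by (simp add: algebra_simps)
  then show "coord0 (z + w) = coord0 z + coord0 w" "coord1 (z + w) = coord1 z + coord1 w"
    using coords_eq[of "coord0 z + coord0 w" "coord1 z + coord1 w"] coords by auto
qed

lemma coords_mult:
  "coord0 (z * w) = coord0 z * coord0 w + coord1 z * coord1 w * (u * u)"
  "coord1 (z * w) = coord0 z * coord1 w + coord1 z * coord0 w"
proof -
  have "z * w = (coord0 z + coord1 z * u) * (coord0 w + coord1 w * u)"
    using coords(3)[of z] coords(3)[of w] by simp
  then have "z * w = (coord0 z * coord0 w + coord1 z * coord1 w * (u * u))
                   + (coord0 z * coord1 w + coord1 z * coord0 w) * u"
    by (simp add: algebra_simps)
  then show "coord0 (z * w) = coord0 z * coord0 w + coord1 z * coord1 w * (u * u)"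
     "coord1 (z * w) = coord0 z * coord1 w + coord1 z * coord0 w"
    using coords_eq[of "coord0 z * coord0 w + coord1 z * coord1 w * (u * u)"
        "coord0 z * coord1 w + coord1 z * coord0 w"] coords u_square_in_F by auto
qed

lemma coords_theta: "coord0 (\<theta> z) = coord0 z" "coord1 (\<theta> z) = - coord1 z"
proof -
  have "\<theta> z = coord0 z + (- coord1 z) * u"
    using theta_coords[of "coord0 z" "coord1 z"] coords[of z] by simp
  then show "coord0 (\<theta> z) = coord0 z" "coord1 (\<theta> z) = - coord1 z"
    using coords_eq[of "coord0 z" "- coord1 z"] coords by auto
qed

end

context ring
begin

lemma sandwich_absorb_left:
  "x = a \<otimes> x \<otimes> b \<Longrightarrow> a \<otimes> a = a \<Longrightarrow> x \<in> carrier R \<Longrightarrow> a \<in> carrier R \<Longrightarrow> b \<in> carrier R \<Longrightarrow>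
    a \<otimes> x = x"
  by (metis m_assoc m_closed)

lemma sandwich_absorb_right:
  "x = a \<otimes> x \<otimes> b \<Longrightarrow> b \<otimes> b = b \<Longrightarrow> x \<in> carrier R \<Longrightarrow> a \<in> carrier R \<Longrightarrow> b \<in> carrier R \<Longrightarrow>
    x \<otimes> b = x"
  by (metis m_assoc m_closed)

lemma sandwich_zero_left:
  "x = a \<otimes> x \<otimes> b \<Longrightarrow> c \<otimes> a = \<zero> \<Longrightarrow> x \<in> carrier R \<Longrightarrow> a \<in> carrier R \<Longrightarrow> b \<in> carrier R \<Longrightarrow>
    c \<in> carrier R \<Longrightarrow> c \<otimes> x = \<zero>"
  by (metis m_assoc m_closed l_null)

lemma sandwich_zero_right:
  "x = a \<otimes> x \<otimes> b \<Longrightarrow> b \<otimes> c = \<zero> \<Longrightarrow> x \<in> carrier R \<Longrightarrow> a \<in> carrier R \<Longrightarrow> b \<in> carrier R \<Longrightarrow>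
    c \<in> carrier R \<Longrightarrow> x \<otimes> c = \<zero>"
  by (metis m_assoc m_closed r_null)

lemma mult_eq_assoc:
  "x \<otimes> y = z \<Longrightarrow> x \<in> carrier R \<Longrightarrow> y \<in> carrier R \<Longrightarrow> w \<in> carrier R \<Longrightarrow> x \<otimes> (y \<otimes> w) = z \<otimes> w"
  by (metis m_assoc)

end

locale Lambda_relations = F_algebra Q F \<kappa>
  for Q :: "('c, 'm) ring_scheme" (structure) and F :: "'a::field set" and \<kappa> +
  fixes U V :: 'a and e1 e2 e3 \<alpha> \<beta> \<gamma> s2 s3 :: 'c
  assumes UF[simp]: "U \<in> F" and VF[simp]: "V \<in> F" and UV: "U * V = 1"
  and gens_closed[simp]: "e1 \<in> carrier Q" "e2 \<in> carrier Q" "e3 \<in> carrier Q" "\<alpha> \<in> carrier Q"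
       "\<beta> \<in> carrier Q" "\<gamma> \<in> carrier Q" "s2 \<in> carrier Q" "s3 \<in> carrier Q"
  and idem: "e1 \<otimes> e1 = e1" "e2 \<otimes> e2 = e2" "e3 \<otimes> e3 = e3"
  and orth: "e1 \<otimes> e2 = \<zero>" "e1 \<otimes> e3 = \<zero>" "e2 \<otimes> e1 = \<zero>" "e2 \<otimes> e3 = \<zero>" "e3 \<otimes> e1 = \<zero>" "e3 \<otimes> e2 = \<zero>"
  and idem_sum: "e1 \<oplus> e2 \<oplus> e3 = \<one>"
  and sandwich: "\<alpha> = e1 \<otimes> \<alpha> \<otimes> e2" "\<beta> = e2 \<otimes> \<beta> \<otimes> e3" "\<gamma> = e3 \<otimes> \<gamma> \<otimes> e1"
        "s2 = e2 \<otimes> s2 \<otimes> e2" "s3 = e3 \<otimes> s3 \<otimes> e3"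
  and path_zero: "\<alpha> \<otimes> \<beta> = \<zero>" "\<beta> \<otimes> \<gamma> = \<zero>" "\<gamma> \<otimes> \<alpha> = \<zero>"
  and loop_square: "s2 \<otimes> s2 = \<kappa> U \<otimes> e2" "s3 \<otimes> s3 = \<kappa> U \<otimes> e3"
  and two: "(2::'a) \<noteq> 0"
begin

lemma UV_cancel: "U * (V * x) = x" using UV by (metis mult.assoc mult_1)

lemma absorb_rels:
  "e1 \<otimes> \<alpha> = \<alpha>" "\<alpha> \<otimes> e2 = \<alpha>" "e2 \<otimes> \<beta> = \<beta>" "\<beta> \<otimes> e3 = \<beta>" "e3 \<otimes> \<gamma> = \<gamma>" "\<gamma> \<otimes> e1 = \<gamma>"
  "e2 \<otimes> s2 = s2" "s2 \<otimes> e2 = s2" "e3 \<otimes> s3 = s3" "s3 \<otimes> e3 = s3"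
  using sandwich[THEN sandwich_absorb_left] sandwich[THEN sandwich_absorb_right] idem by simp_all

lemma zero_rels:
  "e2 \<otimes> \<alpha> = \<zero>" "e3 \<otimes> \<alpha> = \<zero>" "\<alpha> \<otimes> e1 = \<zero>" "\<alpha> \<otimes> e3 = \<zero>"
  "e1 \<otimes> \<beta> = \<zero>" "e3 \<otimes> \<beta> = \<zero>" "\<beta> \<otimes> e1 = \<zero>" "\<beta> \<otimes> e2 = \<zero>"
  "e1 \<otimes> \<gamma> = \<zero>" "e2 \<otimes> \<gamma> = \<zero>" "\<gamma> \<otimes> e2 = \<zero>" "\<gamma> \<otimes> e3 = \<zero>"
  "e1 \<otimes> s2 = \<zero>" "e3 \<otimes> s2 = \<zero>" "s2 \<otimes> e1 = \<zero>" "s2 \<otimes> e3 = \<zero>"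
  "e1 \<otimes> s3 = \<zero>" "e2 \<otimes> s3 = \<zero>" "s3 \<otimes> e1 = \<zero>" "s3 \<otimes> e2 = \<zero>"
  using sandwich[THEN sandwich_zero_left] sandwich[THEN sandwich_zero_right] orth by simp_all

lemma path_zero_rels:
  "\<alpha> \<otimes> \<alpha> = \<zero>" "\<alpha> \<otimes> \<gamma> = \<zero>" "\<alpha> \<otimes> s3 = \<zero>"
  "\<beta> \<otimes> \<alpha> = \<zero>" "\<beta> \<otimes> \<beta> = \<zero>" "\<beta> \<otimes> s2 = \<zero>"
  "\<gamma> \<otimes> \<beta> = \<zero>" "\<gamma> \<otimes> \<gamma> = \<zero>" "\<gamma> \<otimes> s2 = \<zero>" "\<gamma> \<otimes> s3 = \<zero>"
  "s2 \<otimes> \<alpha> = \<zero>" "s2 \<otimes> \<gamma> = \<zero>" "s2 \<otimes> s3 = \<zero>"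
  "s3 \<otimes> \<alpha> = \<zero>" "s3 \<otimes> \<beta> = \<zero>" "s3 \<otimes> s2 = \<zero>"
  using sandwich[THEN sandwich_zero_right] zero_rels by simp_all

lemmas path_rels = idem orth absorb_rels zero_rels path_zero_rels path_zero loop_square

lemmas path_rels_assoc = path_rels[THEN mult_eq_assoc]

lemma scal_commute_gens: "b \<in> F \<Longrightarrow> y \<in> carrier Q \<Longrightarrow> e1 \<otimes> (\<kappa> b \<otimes> y) = \<kappa> b \<otimes> (e1 \<otimes> y)"
  "b \<in> F \<Longrightarrow> y \<in> carrier Q \<Longrightarrow> e2 \<otimes> (\<kappa> b \<otimes> y) = \<kappa> b \<otimes> (e2 \<otimes> y)"
  "b \<in> F \<Longrightarrow> y \<in> carrier Q \<Longrightarrow> e3 \<otimes> (\<kappa> b \<otimes> y) = \<kappa> b \<otimes> (e3 \<otimes> y)"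
  "b \<in> F \<Longrightarrow> y \<in> carrier Q \<Longrightarrow> \<alpha> \<otimes> (\<kappa> b \<otimes> y) = \<kappa> b \<otimes> (\<alpha> \<otimes> y)"
  "b \<in> F \<Longrightarrow> y \<in> carrier Q \<Longrightarrow> \<beta> \<otimes> (\<kappa> b \<otimes> y) = \<kappa> b \<otimes> (\<beta> \<otimes> y)"
  "b \<in> F \<Longrightarrow> y \<in> carrier Q \<Longrightarrow> \<gamma> \<otimes> (\<kappa> b \<otimes> y) = \<kappa> b \<otimes> (\<gamma> \<otimes> y)"
  "b \<in> F \<Longrightarrow> y \<in> carrier Q \<Longrightarrow> s2 \<otimes> (\<kappa> b \<otimes> y) = \<kappa> b \<otimes> (s2 \<otimes> y)"
  "b \<in> F \<Longrightarrow> y \<in> carrier Q \<Longrightarrow> s3 \<otimes> (\<kappa> b \<otimes> y) = \<kappa> b \<otimes> (s3 \<otimes> y)"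
  "b \<in> F \<Longrightarrow> e1 \<otimes> \<kappa> b = \<kappa> b \<otimes> e1"
  "b \<in> F \<Longrightarrow> e2 \<otimes> \<kappa> b = \<kappa> b \<otimes> e2"
  "b \<in> F \<Longrightarrow> e3 \<otimes> \<kappa> b = \<kappa> b \<otimes> e3"
  "b \<in> F \<Longrightarrow> \<alpha> \<otimes> \<kappa> b = \<kappa> b \<otimes> \<alpha>"
  "b \<in> F \<Longrightarrow> \<beta> \<otimes> \<kappa> b = \<kappa> b \<otimes> \<beta>"
  "b \<in> F \<Longrightarrow> \<gamma> \<otimes> \<kappa> b = \<kappa> b \<otimes> \<gamma>"
  "b \<in> F \<Longrightarrow> s2 \<otimes> \<kappa> b = \<kappa> b \<otimes> s2"
  "b \<in> F \<Longrightarrow> s3 \<otimes> \<kappa> b = \<kappa> b \<otimes> s3"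
  by (simp_all add: mult_scal_commute scal_central m_assoc)

lemma minus_eq_scal: "y \<in> carrier Q \<Longrightarrow> \<ominus> y = \<kappa> (-1) \<otimes> y"
  using scal_neg_mult[of 1 y] by (simp add: scal_one)

lemma scal_mult_merge: "a \<in> F \<Longrightarrow> b \<in> F \<Longrightarrow> \<kappa> a \<otimes> \<kappa> b = \<kappa> (a * b)"
  by (simp add: scal_mult)

lemmas normalize = path_rels path_rels_assoc scal_commute_gens scal_mult_assoc scal_mult_merge
  m_assoc l_distr r_distr a_assoc a_comm a_lcomm minus_eq minus_eq_scal scal_add l_null r_null
  l_zero r_zero scal_zero scal_one l_one r_one UV UV_cancel mult_ac

definition at2 :: "'a \<Rightarrow> 'a \<Rightarrow> 'c" where "at2 a b = \<kappa> a \<otimes> e2 \<oplus> \<kappa> b \<otimes> s2"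
definition at3 :: "'a \<Rightarrow> 'a \<Rightarrow> 'c" where "at3 a b = \<kappa> a \<otimes> e3 \<oplus> \<kappa> b \<otimes> s3"
definition beta0 :: 'c where "beta0 = \<kappa> (1/2) \<otimes> (\<beta> \<oplus> \<kappa> V \<otimes> (s2 \<otimes> \<beta> \<otimes> s3))"
definition beta1 :: 'c where "beta1 = \<kappa> (1/2) \<otimes> (\<beta> \<ominus> \<kappa> V \<otimes> (s2 \<otimes> \<beta> \<otimes> s3))"

lemma beta0_add_beta1: "beta0 \<oplus> beta1 = \<beta>"
  unfolding beta0_def beta1_def by (rule scal_half_sum_diff[OF two]) simp_all

lemma at2_mult: "a \<in> F \<Longrightarrow> b \<in> F \<Longrightarrow> a' \<in> F \<Longrightarrow> b' \<in> F \<Longrightarrow>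
  at2 a b \<otimes> at2 a' b' = at2 (a * a' + b * b' * U) (a * b' + b * a')"
  unfolding at2_def by (simp add: normalize)

lemma at3_mult: "a \<in> F \<Longrightarrow> b \<in> F \<Longrightarrow> a' \<in> F \<Longrightarrow> b' \<in> F \<Longrightarrow>
  at3 a b \<otimes> at3 a' b' = at3 (a * a' + b * b' * U) (a * b' + b * a')"
  unfolding at3_def by (simp add: normalize)

lemma at2_add: "a \<in> F \<Longrightarrow> b \<in> F \<Longrightarrow> a' \<in> F \<Longrightarrow> b' \<in> F \<Longrightarrow>
  at2 a b \<oplus> at2 a' b' = at2 (a + a') (b + b')"
  unfolding at2_def by (simp add: normalize)

lemma at3_add: "a \<in> F \<Longrightarrow> b \<in> F \<Longrightarrow> a' \<in> F \<Longrightarrow> b' \<in> F \<Longrightarrow>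
  at3 a b \<oplus> at3 a' b' = at3 (a + a') (b + b')"
  unfolding at3_def by (simp add: normalize)

lemma scal_at2: "c \<in> F \<Longrightarrow> \<kappa> c \<otimes> at2 1 0 = at2 c 0"
  unfolding at2_def by (simp add: normalize)

lemma scal_at3: "c \<in> F \<Longrightarrow> \<kappa> c \<otimes> at3 1 0 = at3 c 0"
  unfolding at3_def by (simp add: normalize)

lemma idem_sum_at: "e1 \<oplus> at2 1 0 \<oplus> at3 1 0 = \<one>"
  unfolding at2_def at3_def using idem_sum by (simp add: scal_one scal_zero)

lemma at_basis: "at2 1 0 = e2" "at3 1 0 = e3" "at2 0 1 = s2" "at3 0 1 = s3"
  unfolding at2_def at3_def by (simp_all add: scal_one scal_zero)

lemma beta0_at3: "a \<in> F \<Longrightarrow> b \<in> F \<Longrightarrow> beta0 \<otimes> at3 a b = at2 a b \<otimes> beta0"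
  unfolding at2_def at3_def beta0_def by (simp add: normalize)

lemma beta1_at3: "a \<in> F \<Longrightarrow> b \<in> F \<Longrightarrow> beta1 \<otimes> at3 a b = at2 a (- b) \<otimes> beta1"
  unfolding at2_def at3_def beta1_def by (simp add: normalize)

end

locale Lambda'_relations = F_algebra Q F \<kappa>
  for Q :: "('c, 'm) ring_scheme" (structure) and F :: "'a::field set" and \<kappa> +
  fixes U V u :: 'a and \<theta> :: "'a \<Rightarrow> 'a" and e1 \<alpha> \<beta>0 \<beta>1 \<gamma> :: 'c and l2 l3 :: "'a \<Rightarrow> 'c"
  assumes UF[simp]: "U \<in> F" and VF[simp]: "V \<in> F" and UV: "U * V = 1" and u_square: "u * u = U"
  and theta_u: "\<theta> u = - u" and two: "(2::'a) \<noteq> 0"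
  and gens_closed[simp]: "e1 \<in> carrier Q" "\<alpha> \<in> carrier Q" "\<beta>0 \<in> carrier Q" "\<beta>1 \<in> carrier Q" "\<gamma> \<in> carrier Q"
       "l2 z \<in> carrier Q" "l3 z \<in> carrier Q"
  and idem: "e1 \<otimes> e1 = e1"
  and l2_mult: "l2 z \<otimes> l2 w = l2 (z * w)" and l3_mult: "l3 z \<otimes> l3 w = l3 (z * w)"
  and l2_add: "l2 z \<oplus> l2 w = l2 (z + w)" and l3_add: "l3 z \<oplus> l3 w = l3 (z + w)"
  and l2_scal: "c \<in> F \<Longrightarrow> \<kappa> c \<otimes> l2 1 = l2 c" and l3_scal: "c \<in> F \<Longrightarrow> \<kappa> c \<otimes> l3 1 = l3 c"
  and idem_sum: "e1 \<oplus> l2 1 \<oplus> l3 1 = \<one>"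
  and orth: "e1 \<otimes> l2 z = \<zero>" "l2 z \<otimes> e1 = \<zero>" "e1 \<otimes> l3 z = \<zero>" "l3 z \<otimes> e1 = \<zero>"
     "l2 z \<otimes> l3 w = \<zero>" "l3 w \<otimes> l2 z = \<zero>"
  and sandwich: "\<alpha> = e1 \<otimes> \<alpha> \<otimes> l2 1" "\<beta>0 = l2 1 \<otimes> \<beta>0 \<otimes> l3 1" "\<beta>1 = l2 1 \<otimes> \<beta>1 \<otimes> l3 1"
     "\<gamma> = l3 1 \<otimes> \<gamma> \<otimes> e1"
  and beta_commute: "\<beta>0 \<otimes> l3 z = l2 z \<otimes> \<beta>0" "\<beta>1 \<otimes> l3 z = l2 (\<theta> z) \<otimes> \<beta>1"
  and path_zero: "(\<beta>0 \<oplus> \<beta>1) \<otimes> \<gamma> = \<zero>" "\<gamma> \<otimes> \<alpha> = \<zero>" "\<alpha> \<otimes> (\<beta>0 \<oplus> \<beta>1) = \<zero>"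
begin

lemma l_unit: "l2 1 \<otimes> l2 z = l2 z" "l2 z \<otimes> l2 1 = l2 z" "l3 1 \<otimes> l3 z = l3 z" "l3 z \<otimes> l3 1 = l3 z"
  by (simp_all add: l2_mult l3_mult)

lemma sandwich_absorb: "e1 \<otimes> \<alpha> = \<alpha>" "\<alpha> \<otimes> l2 1 = \<alpha>" "l2 1 \<otimes> \<beta>0 = \<beta>0" "\<beta>0 \<otimes> l3 1 = \<beta>0"
  "l2 1 \<otimes> \<beta>1 = \<beta>1" "\<beta>1 \<otimes> l3 1 = \<beta>1" "l3 1 \<otimes> \<gamma> = \<gamma>" "\<gamma> \<otimes> e1 = \<gamma>"
  using sandwich[THEN sandwich_absorb_left] sandwich[THEN sandwich_absorb_right] idem l_unit
  by simp_all

lemma l2_coords: "a \<in> F \<Longrightarrow> b \<in> F \<Longrightarrow> \<kappa> a \<otimes> l2 1 \<oplus> \<kappa> b \<otimes> l2 u = l2 (a + b * u)"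
proof -
  assume a: "a \<in> F" and b: "b \<in> F"
  have "\<kappa> b \<otimes> l2 u = \<kappa> b \<otimes> (l2 1 \<otimes> l2 u)" by (simp add: l_unit)
  also have "\<dots> = l2 b \<otimes> l2 u" using b by (simp add: m_assoc[symmetric] l2_scal)
  also have "\<dots> = l2 (b * u)" by (simp add: l2_mult)
  finally show ?thesis using a by (simp add: l2_scal l2_add)
qed

lemma l3_coords: "a \<in> F \<Longrightarrow> b \<in> F \<Longrightarrow> \<kappa> a \<otimes> l3 1 \<oplus> \<kappa> b \<otimes> l3 u = l3 (a + b * u)"
proof -
  assume a: "a \<in> F" and b: "b \<in> F"
  have "\<kappa> b \<otimes> l3 u = \<kappa> b \<otimes> (l3 1 \<otimes> l3 u)" by (simp add: l_unit)
  also have "\<dots> = l3 b \<otimes> l3 u" using b by (simp add: m_assoc[symmetric] l3_scal)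
  also have "\<dots> = l3 (b * u)" by (simp add: l3_mult)
  finally show ?thesis using a by (simp add: l3_scal l3_add)
qed

lemma conj_u_beta0: "l2 u \<otimes> \<beta>0 \<otimes> l3 u = \<kappa> U \<otimes> \<beta>0"
proof -
  have "l2 u \<otimes> \<beta>0 \<otimes> l3 u = l2 u \<otimes> (l2 u \<otimes> \<beta>0)" by (simp add: m_assoc beta_commute)
  also have "\<dots> = l2 U \<otimes> \<beta>0" by (simp add: m_assoc[symmetric] l2_mult u_square)
  also have "\<dots> = (\<kappa> U \<otimes> l2 1) \<otimes> \<beta>0" by (simp add: l2_scal)
  also have "\<dots> = \<kappa> U \<otimes> \<beta>0" by (simp add: m_assoc sandwich_absorb)
  finally show ?thesis .
qed

lemma conj_u_beta1: "l2 u \<otimes> \<beta>1 \<otimes> l3 u = \<ominus> (\<kappa> U \<otimes> \<beta>1)"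
proof -
  have "l2 u \<otimes> \<beta>1 \<otimes> l3 u = l2 u \<otimes> (l2 (- u) \<otimes> \<beta>1)" by (simp add: m_assoc beta_commute theta_u)
  also have "\<dots> = l2 (- U) \<otimes> \<beta>1" by (simp add: m_assoc[symmetric] l2_mult u_square[symmetric])
  also have "\<dots> = (\<kappa> (- U) \<otimes> l2 1) \<otimes> \<beta>1" by (simp add: l2_scal)
  also have "\<dots> = \<kappa> (- U) \<otimes> \<beta>1" by (simp add: m_assoc sandwich_absorb)
  also have "\<dots> = \<ominus> (\<kappa> U \<otimes> \<beta>1)" by (simp add: scal_neg_mult)
  finally show ?thesis .
qed

lemma conj_u_beta_sum: "\<kappa> V \<otimes> (l2 u \<otimes> (\<beta>0 \<oplus> \<beta>1) \<otimes> l3 u) = \<beta>0 \<ominus> \<beta>1"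
  by (simp add: r_distr l_distr conj_u_beta0 conj_u_beta1 scal_mult_assoc r_minus minus_eq UV
      mult.commute[of V] scal_one)

lemma beta0_from_sum: "\<kappa> (1/2) \<otimes> ((\<beta>0 \<oplus> \<beta>1) \<oplus> \<kappa> V \<otimes> (l2 u \<otimes> (\<beta>0 \<oplus> \<beta>1) \<otimes> l3 u)) = \<beta>0"
  using scal_half_sum_diff[OF two, of \<beta>0 \<beta>1] by (simp only: conj_u_beta_sum) (simp add: r_distr)

lemma beta1_from_sum: "\<kappa> (1/2) \<otimes> ((\<beta>0 \<oplus> \<beta>1) \<ominus> \<kappa> V \<otimes> (l2 u \<otimes> (\<beta>0 \<oplus> \<beta>1) \<otimes> l3 u)) = \<beta>1"
  using scal_half_diff_diff[OF two, of \<beta>0 \<beta>1] by (simp add: conj_u_beta_sum)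

end

section \<open>The isomorphism\<close>

context deg2
begin

abbreviation Lambda_alg :: "(qgen list \<Rightarrow> 'a) set ring" where "Lambda_alg \<equiv> presented F (Lambda_rels u)"
abbreviation Lambda_class :: "(qgen list \<Rightarrow> 'a) \<Rightarrow> (qgen list \<Rightarrow> 'a) set" where
  "Lambda_class \<equiv> pclass F (Lambda_rels u)"
abbreviation Lambda'_alg :: "('a sgen list \<Rightarrow> 'a) set ring" where "Lambda'_alg \<equiv> presented F (Lambda'_rels F \<theta> u)"
abbreviation Lambda'_class :: "('a sgen list \<Rightarrow> 'a) \<Rightarrow> ('a sgen list \<Rightarrow> 'a) set" where
  "Lambda'_class \<equiv> pclass F (Lambda'_rels F \<theta> u)"

text \<open>Keep u^-2 in the form inverse (u * u) in which it enters the instances below.\<close>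
declare inverse_mult_distrib [simp del]

lemma u_square_inverse: "inverse (u * u) \<in> F" "u * u * inverse (u * u) = 1"
  by (rule subfield_closed(6)[OF u_square_in_F], rule right_inverse) (simp add: u_nonzero)

lemma qvert_numerals [simp]: "qvert 1 = V1" "qvert 2 = V2" "qvert 3 = V3"
  by (simp_all add: eval_nat_numeral)

lemma Lambda_rels_closed: "Lambda_rels u \<subseteq> falg_carrier F"
  using u_square_in_F by (auto simp: Lambda_rels_def pathalg_rels_def)

lemma Lambda'_rels_closed: "Lambda'_rels F \<theta> u \<subseteq> falg_carrier F"
  by (auto simp: Lambda'_rels_def TR_rels_def)

sublocale Lambda_quot: free_alg_hom F Lambda_alg Lambda_class
  by (rule free_alg_hom_pclass[OF Lambda_rels_closed])

sublocale Lambda'_quot: free_alg_hom F Lambda'_alg Lambda'_class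
  by (rule free_alg_hom_pclass[OF Lambda'_rels_closed])

lemma Lambda_class_vertex_rels:
  "\<forall>i\<in>{1, 2, 3}. \<forall>j\<in>{1, 2, 3}.
    Lambda_class (fgen (qvert i)) \<otimes>\<^bsub>Lambda_alg\<^esub> Lambda_class (fgen (qvert j))
      = (if i = j then Lambda_class (fgen (qvert i)) else \<zero>\<^bsub>Lambda_alg\<^esub>)"
proof (intro ballI)
  fix i j :: nat assume "i \<in> {1, 2, 3}" "j \<in> {1, 2, 3}"
  then have "fgen (qvert i) [*] fgen (qvert j) [-] (if i = j then fgen (qvert i) else (\<lambda>w. 0))
      \<in> Lambda_rels u"
    unfolding Lambda_rels_def pathalg_rels_def by blast
  from pclass_rel[OF Lambda_rels_closed this]
  show "Lambda_class (fgen (qvert i)) \<otimes>\<^bsub>Lambda_alg\<^esub> Lambda_class (fgen (qvert j))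
      = (if i = j then Lambda_class (fgen (qvert i)) else \<zero>\<^bsub>Lambda_alg\<^esub>)"
    by (cases "i = j")
      (simp_all add: Lambda_quot.hom_fsub_eq_zero_iff Lambda_quot.hom_fmul Lambda_quot.hom_zero)
qed

lemma Lambda_rels_mem:
  "fgen V1 [+] fgen V2 [+] fgen V3 [-] fscal 1 \<in> Lambda_rels u"
  "fgen QAlpha [-] fgen V1 [*] fgen QAlpha [*] fgen V2 \<in> Lambda_rels u"
  "fgen QBeta [-] fgen V2 [*] fgen QBeta [*] fgen V3 \<in> Lambda_rels u"
  "fgen QGamma [-] fgen V3 [*] fgen QGamma [*] fgen V1 \<in> Lambda_rels u"
  "fgen QS2 [-] fgen V2 [*] fgen QS2 [*] fgen V2 \<in> Lambda_rels u"
  "fgen QS3 [-] fgen V3 [*] fgen QS3 [*] fgen V3 \<in> Lambda_rels u"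
  "fgen QAlpha [*] fgen QBeta \<in> Lambda_rels u"
  "fgen QBeta [*] fgen QGamma \<in> Lambda_rels u"
  "fgen QGamma [*] fgen QAlpha \<in> Lambda_rels u"
  "fgen QS2 [*] fgen QS2 [-] fsmul (u * u) (fgen V2) \<in> Lambda_rels u"
  "fgen QS3 [*] fgen QS3 [-] fsmul (u * u) (fgen V3) \<in> Lambda_rels u"
  unfolding Lambda_rels_def pathalg_rels_def by blast+

sublocale Lambda: Lambda_relations Lambda_alg F "\<lambda>c. Lambda_class (fscal c)" "u * u" "inverse (u * u)"
  "Lambda_class (fgen V1)" "Lambda_class (fgen V2)" "Lambda_class (fgen V3)"
  "Lambda_class (fgen QAlpha)" "Lambda_class (fgen QBeta)" "Lambda_class (fgen QGamma)"
  "Lambda_class (fgen QS2)" "Lambda_class (fgen QS3)"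
  by (intro Lambda_relations.intro F_algebra_presented Lambda_rels_closed
      Lambda_relations_axioms.intro u_square_in_F u_square_inverse two_nonzero)
    (use Lambda_class_vertex_rels Lambda_rels_mem[THEN pclass_rel[OF Lambda_rels_closed]] in
      \<open>simp_all add: Lambda_quot.hom_closed Lambda_quot.hom_fsub_eq_zero_iff Lambda_quot.hom_fmul
        Lambda_quot.hom_fadd Lambda_quot.hom_fsmul Lambda_quot.hom_one u_square_in_F\<close>)

lemma Lambda'_rels_mem:
  "fgen E1 [*] fgen E1 [-] fgen E1 \<in> Lambda'_rels F \<theta> u"
  "fgen (L2 z) [*] fgen (L2 w) [-] fgen (L2 (z * w)) \<in> Lambda'_rels F \<theta> u"
  "fgen (L3 z) [*] fgen (L3 w) [-] fgen (L3 (z * w)) \<in> Lambda'_rels F \<theta> u"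
  "fgen (L2 z) [+] fgen (L2 w) [-] fgen (L2 (z + w)) \<in> Lambda'_rels F \<theta> u"
  "fgen (L3 z) [+] fgen (L3 w) [-] fgen (L3 (z + w)) \<in> Lambda'_rels F \<theta> u"
  "c \<in> F \<Longrightarrow> fscal c [*] fgen (L2 1) [-] fgen (L2 c) \<in> Lambda'_rels F \<theta> u"
  "c \<in> F \<Longrightarrow> fscal c [*] fgen (L3 1) [-] fgen (L3 c) \<in> Lambda'_rels F \<theta> u"
  "fgen E1 [+] fgen (L2 1) [+] fgen (L3 1) [-] fscal 1 \<in> Lambda'_rels F \<theta> u"
  "fgen E1 [*] fgen (L2 z) \<in> Lambda'_rels F \<theta> u" "fgen (L2 z) [*] fgen E1 \<in> Lambda'_rels F \<theta> u"
  "fgen E1 [*] fgen (L3 z) \<in> Lambda'_rels F \<theta> u" "fgen (L3 z) [*] fgen E1 \<in> Lambda'_rels F \<theta> u"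
  "fgen (L2 z) [*] fgen (L3 w) \<in> Lambda'_rels F \<theta> u" "fgen (L3 w) [*] fgen (L2 z) \<in> Lambda'_rels F \<theta> u"
  "fgen SAlpha [-] fgen E1 [*] fgen SAlpha [*] fgen (L2 1) \<in> Lambda'_rels F \<theta> u"
  "fgen SBeta0 [-] fgen (L2 1) [*] fgen SBeta0 [*] fgen (L3 1) \<in> Lambda'_rels F \<theta> u"
  "fgen SBeta1 [-] fgen (L2 1) [*] fgen SBeta1 [*] fgen (L3 1) \<in> Lambda'_rels F \<theta> u"
  "fgen SGamma [-] fgen (L3 1) [*] fgen SGamma [*] fgen E1 \<in> Lambda'_rels F \<theta> u"
  "fgen SBeta0 [*] fgen (L3 z) [-] fgen (L2 z) [*] fgen SBeta0 \<in> Lambda'_rels F \<theta> u"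
  "fgen SBeta1 [*] fgen (L3 z) [-] fgen (L2 (\<theta> z)) [*] fgen SBeta1 \<in> Lambda'_rels F \<theta> u"
  "(fgen SBeta0 [+] fgen SBeta1) [*] fgen SGamma \<in> Lambda'_rels F \<theta> u"
  "fsmul (1/2) (fgen SGamma [*] fgen SAlpha
     [+] fgen (L3 (inverse u)) [*] fgen SGamma [*] fgen SAlpha [*] fgen (L2 u)) \<in> Lambda'_rels F \<theta> u"
  "fsmul (1/2) (fgen SGamma [*] fgen SAlpha
     [-] fgen (L3 (inverse u)) [*] fgen SGamma [*] fgen SAlpha [*] fgen (L2 u)) \<in> Lambda'_rels F \<theta> u"
  "fgen SAlpha [*] (fgen SBeta0 [+] fgen SBeta1) \<in> Lambda'_rels F \<theta> u"
  unfolding Lambda'_rels_def TR_rels_def by blast+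

sublocale Lambda': Lambda'_relations Lambda'_alg F "\<lambda>c. Lambda'_class (fscal c)" "u * u" "inverse (u * u)"
  u \<theta> "Lambda'_class (fgen E1)" "Lambda'_class (fgen SAlpha)" "Lambda'_class (fgen SBeta0)"
  "Lambda'_class (fgen SBeta1)" "Lambda'_class (fgen SGamma)"
  "\<lambda>z. Lambda'_class (fgen (L2 z))" "\<lambda>z. Lambda'_class (fgen (L3 z))"
proof (intro Lambda'_relations.intro F_algebra_presented Lambda'_rels_closed
    Lambda'_relations_axioms.intro u_square_in_F u_square_inverse two_nonzero theta_u refl)
  interpret F_algebra Lambda'_alg F "\<lambda>c. Lambda'_class (fscal c)"
    by (rule F_algebra_presented[OF Lambda'_rels_closed])
  let ?\<gamma>\<alpha> = "Lambda'_class (fgen SGamma) \<otimes>\<^bsub>Lambda'_alg\<^esub> Lambda'_class (fgen SAlpha)"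
  let ?Y = "Lambda'_class (fgen (L3 (inverse u))) \<otimes>\<^bsub>Lambda'_alg\<^esub> Lambda'_class (fgen SGamma)
    \<otimes>\<^bsub>Lambda'_alg\<^esub> Lambda'_class (fgen SAlpha) \<otimes>\<^bsub>Lambda'_alg\<^esub> Lambda'_class (fgen (L2 u))"
  text \<open>The two defining relations are (gamma alpha \<plusminus> u^-1 gamma alpha u) / 2;
    their sum is gamma alpha.\<close>
  have "?\<gamma>\<alpha> = Lambda'_class (fscal (1/2)) \<otimes>\<^bsub>Lambda'_alg\<^esub> (?\<gamma>\<alpha> \<oplus>\<^bsub>Lambda'_alg\<^esub> ?Y)
      \<oplus>\<^bsub>Lambda'_alg\<^esub> Lambda'_class (fscal (1/2)) \<otimes>\<^bsub>Lambda'_alg\<^esub> (?\<gamma>\<alpha> \<ominus>\<^bsub>Lambda'_alg\<^esub> ?Y)"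
    by (rule scal_half_sum_diff[OF two_nonzero, symmetric]) (simp_all add: Lambda'_quot.hom_closed)
  then show "?\<gamma>\<alpha> = \<zero>\<^bsub>Lambda'_alg\<^esub>"
    using Lambda'_rels_mem[THEN pclass_rel[OF Lambda'_rels_closed]]
    by (simp add: Lambda'_quot.hom_fmul Lambda'_quot.hom_fadd Lambda'_quot.hom_fsub
        Lambda'_quot.hom_fsmul)
qed (use Lambda'_rels_mem[THEN pclass_rel[OF Lambda'_rels_closed]] in
    \<open>simp_all add: Lambda'_quot.hom_closed Lambda'_quot.hom_fsub_eq_zero_iff Lambda'_quot.hom_fmul
      Lambda'_quot.hom_fadd Lambda'_quot.hom_fsmul Lambda'_quot.hom_one\<close>)

definition to_Lambda :: "'a sgen \<Rightarrow> qgen list \<Rightarrow> 'a" where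
  "to_Lambda x = (case x of
      E1 \<Rightarrow> fgen V1
    | L2 z \<Rightarrow> fsmul (coord0 z) (fgen V2) [+] fsmul (coord1 z) (fgen QS2)
    | L3 z \<Rightarrow> fsmul (coord0 z) (fgen V3) [+] fsmul (coord1 z) (fgen QS3)
    | SAlpha \<Rightarrow> fgen QAlpha
    | SBeta0 \<Rightarrow> fsmul (1/2) (fgen QBeta [+] fsmul (inverse (u * u)) (fgen QS2 [*] fgen QBeta [*] fgen QS3))
    | SBeta1 \<Rightarrow> fsmul (1/2) (fgen QBeta [-] fsmul (inverse (u * u)) (fgen QS2 [*] fgen QBeta [*] fgen QS3))
    | SGamma \<Rightarrow> fgen QGamma)"

definition to_Lambda' :: "qgen \<Rightarrow> 'a sgen list \<Rightarrow> 'a" where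
  "to_Lambda' y = (case y of
      V1 \<Rightarrow> fgen E1 | V2 \<Rightarrow> fgen (L2 1) | V3 \<Rightarrow> fgen (L3 1)
    | QAlpha \<Rightarrow> fgen SAlpha | QBeta \<Rightarrow> fgen SBeta0 [+] fgen SBeta1 | QGamma \<Rightarrow> fgen SGamma
    | QS2 \<Rightarrow> fgen (L2 u) | QS3 \<Rightarrow> fgen (L3 u))"

lemma to_Lambda_closed: "to_Lambda x \<in> falg_carrier F"
  by (cases x) (simp_all add: to_Lambda_def coords u_square_inverse)

lemma to_Lambda'_closed: "to_Lambda' y \<in> falg_carrier F"
  by (cases y) (simp_all add: to_Lambda'_def)

definition to_Lambda_hom :: "('a sgen list \<Rightarrow> 'a) \<Rightarrow> (qgen list \<Rightarrow> 'a) set" where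
  "to_Lambda_hom = Lambda_class \<circ> subst to_Lambda"
definition to_Lambda'_hom :: "(qgen list \<Rightarrow> 'a) \<Rightarrow> ('a sgen list \<Rightarrow> 'a) set" where
  "to_Lambda'_hom = Lambda'_class \<circ> subst to_Lambda'"

sublocale to_Lambda_hom: free_alg_hom F Lambda_alg to_Lambda_hom
  unfolding to_Lambda_hom_def
  by (rule free_alg_hom_pclass_subst[OF Lambda_rels_closed to_Lambda_closed])

sublocale to_Lambda'_hom: free_alg_hom F Lambda'_alg to_Lambda'_hom
  unfolding to_Lambda'_hom_def
  by (rule free_alg_hom_pclass_subst[OF Lambda'_rels_closed to_Lambda'_closed])

lemma to_Lambda_hom_gens:
  "to_Lambda_hom (fgen E1) = Lambda_class (fgen V1)"
  "to_Lambda_hom (fgen (L2 z)) = Lambda.at2 (coord0 z) (coord1 z)"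
  "to_Lambda_hom (fgen (L3 z)) = Lambda.at3 (coord0 z) (coord1 z)"
  "to_Lambda_hom (fgen SAlpha) = Lambda_class (fgen QAlpha)"
  "to_Lambda_hom (fgen SBeta0) = Lambda.beta0"
  "to_Lambda_hom (fgen SBeta1) = Lambda.beta1"
  "to_Lambda_hom (fgen SGamma) = Lambda_class (fgen QGamma)"
  "to_Lambda_hom (fscal c) = Lambda_class (fscal c)"
  by (simp_all add: to_Lambda_hom_def to_Lambda_def Lambda.at2_def Lambda.at3_def Lambda.beta0_def
      Lambda.beta1_def coords u_square_inverse Lambda_quot.hom_fmul Lambda_quot.hom_fadd
      Lambda_quot.hom_fsub Lambda_quot.hom_fsmul)

lemma to_Lambda'_hom_gens:
  "to_Lambda'_hom (fgen V1) = Lambda'_class (fgen E1)"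
  "to_Lambda'_hom (fgen V2) = Lambda'_class (fgen (L2 1))"
  "to_Lambda'_hom (fgen V3) = Lambda'_class (fgen (L3 1))"
  "to_Lambda'_hom (fgen QAlpha) = Lambda'_class (fgen SAlpha)"
  "to_Lambda'_hom (fgen QBeta) = Lambda'_class (fgen SBeta0) \<oplus>\<^bsub>Lambda'_alg\<^esub> Lambda'_class (fgen SBeta1)"
  "to_Lambda'_hom (fgen QGamma) = Lambda'_class (fgen SGamma)"
  "to_Lambda'_hom (fgen QS2) = Lambda'_class (fgen (L2 u))"
  "to_Lambda'_hom (fgen QS3) = Lambda'_class (fgen (L3 u))"
  "to_Lambda'_hom (fscal c) = Lambda'_class (fscal c)"
  by (simp_all add: to_Lambda'_hom_def to_Lambda'_def Lambda'_quot.hom_fadd)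

lemmas to_Lambda_hom_simps = to_Lambda_hom.hom_fsub_eq_zero_iff to_Lambda_hom.hom_fmul
  to_Lambda_hom.hom_fadd to_Lambda_hom.hom_fsmul to_Lambda_hom_gens coords coords_one

lemma to_Lambda_hom_vertex_rels:
  "to_Lambda_hom (fgen E1 [*] fgen E1 [-] fgen E1) = \<zero>\<^bsub>Lambda_alg\<^esub>"
  "to_Lambda_hom (fgen E1 [+] fgen (L2 1) [+] fgen (L3 1) [-] fscal 1) = \<zero>\<^bsub>Lambda_alg\<^esub>"
  "to_Lambda_hom (fgen E1 [*] fgen (L2 z)) = \<zero>\<^bsub>Lambda_alg\<^esub>"
  "to_Lambda_hom (fgen (L2 z) [*] fgen E1) = \<zero>\<^bsub>Lambda_alg\<^esub>"
  "to_Lambda_hom (fgen E1 [*] fgen (L3 z)) = \<zero>\<^bsub>Lambda_alg\<^esub>"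
  "to_Lambda_hom (fgen (L3 z) [*] fgen E1) = \<zero>\<^bsub>Lambda_alg\<^esub>"
  "to_Lambda_hom (fgen (L2 z) [*] fgen (L3 w)) = \<zero>\<^bsub>Lambda_alg\<^esub>"
  "to_Lambda_hom (fgen (L3 w) [*] fgen (L2 z)) = \<zero>\<^bsub>Lambda_alg\<^esub>"
  using Lambda.idem_sum_at Lambda.scal_one
  by (simp_all add: to_Lambda_hom_simps Lambda.at2_def Lambda.at3_def Lambda.normalize)

lemma to_Lambda_hom_field_rels:
  "to_Lambda_hom (fgen (L2 z) [*] fgen (L2 w) [-] fgen (L2 (z * w))) = \<zero>\<^bsub>Lambda_alg\<^esub>"
  "to_Lambda_hom (fgen (L3 z) [*] fgen (L3 w) [-] fgen (L3 (z * w))) = \<zero>\<^bsub>Lambda_alg\<^esub>"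
  "to_Lambda_hom (fgen (L2 z) [+] fgen (L2 w) [-] fgen (L2 (z + w))) = \<zero>\<^bsub>Lambda_alg\<^esub>"
  "to_Lambda_hom (fgen (L3 z) [+] fgen (L3 w) [-] fgen (L3 (z + w))) = \<zero>\<^bsub>Lambda_alg\<^esub>"
  "c \<in> F \<Longrightarrow> to_Lambda_hom (fscal c [*] fgen (L2 1) [-] fgen (L2 c)) = \<zero>\<^bsub>Lambda_alg\<^esub>"
  "c \<in> F \<Longrightarrow> to_Lambda_hom (fscal c [*] fgen (L3 1) [-] fgen (L3 c)) = \<zero>\<^bsub>Lambda_alg\<^esub>"
  by (simp_all add: to_Lambda_hom_simps Lambda.at2_mult Lambda.at3_mult Lambda.at2_add
      Lambda.at3_add Lambda.scal_at2 Lambda.scal_at3 coords_mult coords_add coords_of_F)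

lemma to_Lambda_hom_arrow_rels:
  "to_Lambda_hom (fgen SAlpha [-] fgen E1 [*] fgen SAlpha [*] fgen (L2 1)) = \<zero>\<^bsub>Lambda_alg\<^esub>"
  "to_Lambda_hom (fgen SBeta0 [-] fgen (L2 1) [*] fgen SBeta0 [*] fgen (L3 1)) = \<zero>\<^bsub>Lambda_alg\<^esub>"
  "to_Lambda_hom (fgen SBeta1 [-] fgen (L2 1) [*] fgen SBeta1 [*] fgen (L3 1)) = \<zero>\<^bsub>Lambda_alg\<^esub>"
  "to_Lambda_hom (fgen SGamma [-] fgen (L3 1) [*] fgen SGamma [*] fgen E1) = \<zero>\<^bsub>Lambda_alg\<^esub>"
  by (simp_all add: to_Lambda_hom_simps Lambda.at_basis Lambda.beta0_def Lambda.beta1_def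
      Lambda.normalize)

lemma to_Lambda_hom_beta_rels:
  "to_Lambda_hom (fgen SBeta0 [*] fgen (L3 z) [-] fgen (L2 z) [*] fgen SBeta0) = \<zero>\<^bsub>Lambda_alg\<^esub>"
  "to_Lambda_hom (fgen SBeta1 [*] fgen (L3 z) [-] fgen (L2 (\<theta> z)) [*] fgen SBeta1) = \<zero>\<^bsub>Lambda_alg\<^esub>"
  "to_Lambda_hom ((fgen SBeta0 [+] fgen SBeta1) [*] fgen SGamma) = \<zero>\<^bsub>Lambda_alg\<^esub>"
  "to_Lambda_hom (fgen SAlpha [*] (fgen SBeta0 [+] fgen SBeta1)) = \<zero>\<^bsub>Lambda_alg\<^esub>"
  by (simp_all add: to_Lambda_hom_simps Lambda.beta0_at3 Lambda.beta1_at3 coords_theta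
      Lambda.beta0_add_beta1 Lambda.path_zero)

lemma to_Lambda_hom_gamma_alpha_rels:
  "to_Lambda_hom (fsmul (1/2) (fgen SGamma [*] fgen SAlpha
      [+] fgen (L3 (inverse u)) [*] fgen SGamma [*] fgen SAlpha [*] fgen (L2 u))) = \<zero>\<^bsub>Lambda_alg\<^esub>"
  "to_Lambda_hom (fsmul (1/2) (fgen SGamma [*] fgen SAlpha
      [-] fgen (L3 (inverse u)) [*] fgen SGamma [*] fgen SAlpha [*] fgen (L2 u))) = \<zero>\<^bsub>Lambda_alg\<^esub>"
  by (simp_all add: to_Lambda_hom_simps to_Lambda_hom.hom_fsub coords_inverse_u coords_u
      u_square_inverse Lambda.at2_def Lambda.at3_def Lambda.normalize)

lemma to_Lambda_respects_rels:
  assumes "r \<in> Lambda'_rels F \<theta> u"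
  shows "Lambda_class (subst to_Lambda r) = \<zero>\<^bsub>Lambda_alg\<^esub>"
proof -
  have "to_Lambda_hom r = \<zero>\<^bsub>Lambda_alg\<^esub>"
    using assms unfolding Lambda'_rels_def TR_rels_def
    by (elim UnE insertE CollectE emptyE exE conjE; simp only: to_Lambda_hom_vertex_rels
        to_Lambda_hom_field_rels to_Lambda_hom_arrow_rels to_Lambda_hom_beta_rels
        to_Lambda_hom_gamma_alpha_rels)
  then show ?thesis by (simp add: to_Lambda_hom_def)
qed

lemmas to_Lambda'_hom_simps = to_Lambda'_hom.hom_fsub_eq_zero_iff to_Lambda'_hom.hom_fmul
  to_Lambda'_hom.hom_fadd to_Lambda'_hom.hom_fsmul to_Lambda'_hom.hom_zero to_Lambda'_hom_gens

lemma to_Lambda'_hom_vertex_rels: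
  "\<forall>i\<in>{1, 2, 3}. \<forall>j\<in>{1, 2, 3}. to_Lambda'_hom (fgen (qvert i) [*] fgen (qvert j)
    [-] (if i = j then fgen (qvert i) else (\<lambda>w. 0))) = \<zero>\<^bsub>Lambda'_alg\<^esub>"
  by (simp add: to_Lambda'_hom_simps Lambda'.idem Lambda'.l_unit Lambda'.orth)

lemma to_Lambda'_hom_quiver_rels:
  "to_Lambda'_hom (fgen V1 [+] fgen V2 [+] fgen V3 [-] fscal 1) = \<zero>\<^bsub>Lambda'_alg\<^esub>"
  "to_Lambda'_hom (fgen QAlpha [-] fgen V1 [*] fgen QAlpha [*] fgen V2) = \<zero>\<^bsub>Lambda'_alg\<^esub>"
  "to_Lambda'_hom (fgen QBeta [-] fgen V2 [*] fgen QBeta [*] fgen V3) = \<zero>\<^bsub>Lambda'_alg\<^esub>"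
  "to_Lambda'_hom (fgen QGamma [-] fgen V3 [*] fgen QGamma [*] fgen V1) = \<zero>\<^bsub>Lambda'_alg\<^esub>"
  "to_Lambda'_hom (fgen QS2 [-] fgen V2 [*] fgen QS2 [*] fgen V2) = \<zero>\<^bsub>Lambda'_alg\<^esub>"
  "to_Lambda'_hom (fgen QS3 [-] fgen V3 [*] fgen QS3 [*] fgen V3) = \<zero>\<^bsub>Lambda'_alg\<^esub>"
  "to_Lambda'_hom (fgen QAlpha [*] fgen QBeta) = \<zero>\<^bsub>Lambda'_alg\<^esub>"
  "to_Lambda'_hom (fgen QBeta [*] fgen QGamma) = \<zero>\<^bsub>Lambda'_alg\<^esub>"
  "to_Lambda'_hom (fgen QGamma [*] fgen QAlpha) = \<zero>\<^bsub>Lambda'_alg\<^esub>"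
  "to_Lambda'_hom (fgen QS2 [*] fgen QS2 [-] fsmul (u * u) (fgen V2)) = \<zero>\<^bsub>Lambda'_alg\<^esub>"
  "to_Lambda'_hom (fgen QS3 [*] fgen QS3 [-] fsmul (u * u) (fgen V3)) = \<zero>\<^bsub>Lambda'_alg\<^esub>"
  using Lambda'.idem_sum Lambda'.scal_one
  by (simp_all add: to_Lambda'_hom_simps u_square_in_F Lambda'.sandwich_absorb Lambda'.l_unit
      Lambda'_quot.Q.m_assoc Lambda'_quot.Q.l_distr Lambda'_quot.Q.r_distr Lambda'.path_zero Lambda'.l2_mult
      Lambda'.l3_mult Lambda'.l2_scal Lambda'.l3_scal)

lemma to_Lambda'_respects_rels:
  assumes "r \<in> Lambda_rels u"
  shows "Lambda'_class (subst to_Lambda' r) = \<zero>\<^bsub>Lambda'_alg\<^esub>"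
proof -
  have "to_Lambda'_hom r = \<zero>\<^bsub>Lambda'_alg\<^esub>"
    using assms unfolding Lambda_rels_def pathalg_rels_def
  proof (elim UnE)
    assume "r \<in> {fgen (qvert i) [*] fgen (qvert j) [-] (if i = j then fgen (qvert i) else (\<lambda>w. 0))
      | i j. i \<in> {1, 2, 3} \<and> j \<in> {1, 2, 3}}"
    then show ?thesis using to_Lambda'_hom_vertex_rels by blast
  qed (elim insertE emptyE; simp only: to_Lambda'_hom_quiver_rels)+
  then show ?thesis by (simp add: to_Lambda'_hom_def)
qed

lemma Lambda_class_roundtrip: "Lambda_class (subst to_Lambda (to_Lambda' y)) = Lambda_class (fgen y)"
proof -
  have "to_Lambda_hom (to_Lambda' y) = Lambda_class (fgen y)"
    by (cases y) (simp_all add: to_Lambda'_def to_Lambda_hom.hom_fadd to_Lambda_hom_gens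
        coords_one coords_u Lambda.at_basis Lambda.beta0_add_beta1)
  then show ?thesis by (simp add: to_Lambda_hom_def)
qed

lemma Lambda'_class_roundtrip: "Lambda'_class (subst to_Lambda' (to_Lambda x)) = Lambda'_class (fgen x)"
proof -
  have "to_Lambda'_hom (to_Lambda x) = Lambda'_class (fgen x)"
    by (cases x) (simp_all add: to_Lambda_def to_Lambda'_hom_simps to_Lambda'_hom.hom_fsub coords
        u_square_inverse Lambda'.l2_coords Lambda'.l3_coords Lambda'.beta0_from_sum
        Lambda'.beta1_from_sum)
  then show ?thesis by (simp add: to_Lambda'_hom_def)
qed

end

theorem proposition4p3:
  fixes F :: "'a::field set" and \<theta> :: "'a \<Rightarrow> 'a" and u :: 'a
  assumes "deg2_datum F \<theta> u"
  shows "F_alg_iso F (Lambda'_rels F \<theta> u) (Lambda_rels u :: (qgen list \<Rightarrow> 'a) set)"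
proof -
  interpret deg2 F \<theta> u by (rule deg2.intro) fact
  show ?thesis
    by (rule F_alg_iso_by_substitutions[OF Lambda'_rels_closed Lambda_rels_closed
          to_Lambda_closed to_Lambda'_closed to_Lambda_respects_rels to_Lambda'_respects_rels
          Lambda'_class_roundtrip Lambda_class_roundtrip])
qed

end
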